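(* Let $1\le r\le K\le d$ and let $\bm{A}\in\mathbb{R}^{d\times K}$ have the form $\bm{A}=\begin{bmatrix}\widetilde{\bm{A}}&\bm{0}\\\bm{0}&\bm{0}\end{bmatrix}$, where $\widetilde{\bm{A}}=\operatorname{diag}(a_1,\ldots,a_r)$ with $a_1\ge\cdots\ge a_r>0$. Suppose there are indices $0=s_0<s_1<\cdots<s_p=r$ such that $a_{s_{i-1}+1}=\cdots=a_{s_i}$ for $i=1,\ldots,p$ and $a_{s_1}>a_{s_2}>\cdots>a_{s_p}$; let $h_i=s_i-s_{i-1}$. Let $g(\bm{Q})=\langle\bm{A},\bm{Q}\rangle+\delta_{{\rm St}(d,K)}(\bm{Q})$ and $\mathcal{Q}=\{\bm{Q}\in{\rm St}(d,K):\bm{0}\in\partial g(\bm{Q})\}$. Then $\bm{Q}\in\mathcal{Q}$ if and only if $$\bm{Q}=\begin{bmatrix}\bm{U}\operatorname{diag}(\bm{q})\bm{U}^T&\bm{0}\\\bm{0}&\bm{V}\end{bmatrix},$$ where $\bm{U}=\operatorname{blkdiag}(\bm{U}_1,\ldots,\bm{U}_p)$ with each $\bm{U}_i$ an $h_i\times h_i$ orthogonal matrix, $\bm{q}\in\{\pm1\}^r$, and $\bm{V}\in{\rm St}(d-r,K-r)$.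
   Context: ${\rm St}(m,k)=\{\bm{Q}\in\mathbb{R}^{m\times k}:\bm{Q}^T\bm{Q}=\bm{I}_k\}$; $\langle\bm{A},\bm{B}\rangle=\operatorname{tr}(\bm{A}^T\bm{B})$; $\delta_{\mathcal{S}}$ is the indicator function of $\mathcal{S}$; $\partial$ is the limiting subdifferential. $\operatorname{blkdiag}$ denotes the block diagonal matrix with the given diagonal blocks. The upper-left block of $\bm{Q}$ is $r\times r$. *)

theory Defs
  imports "Jordan_Normal_Form.Matrix" "HOL-Library.Extended_Real"
begin

definition frob_inner :: "real mat \<Rightarrow> real mat \<Rightarrow> real" where
  "frob_inner A B = (\<Sum>i<dim_row A. \<Sum>j<dim_col A. A $$ (i,j) * B $$ (i,j))"

definition frob_norm :: "real mat \<Rightarrow> real" where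
  "frob_norm A = sqrt (frob_inner A A)"

definition stiefel :: "nat \<Rightarrow> nat \<Rightarrow> real mat set" where
  "stiefel m k = {Q \<in> carrier_mat m k. Q\<^sup>T * Q = 1\<^sub>m k}"

definition diagm :: "nat \<Rightarrow> (nat \<Rightarrow> real) \<Rightarrow> real mat" where
  "diagm n a = mat n n (\<lambda>(i,j). if i = j then a i else 0)"

fun blkdiag :: "real mat list \<Rightarrow> real mat" where
  "blkdiag [] = 0\<^sub>m 0 0"
| "blkdiag (M # Ms) = four_block_mat M (0\<^sub>m (dim_row M) (dim_col (blkdiag Ms)))
      (0\<^sub>m (dim_row (blkdiag Ms)) (dim_col M)) (blkdiag Ms)"

definition indicator_fun :: "real mat set \<Rightarrow> real mat \<Rightarrow> ereal" where
  "indicator_fun S X = (if X \<in> S then 0 else \<infinity>)"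

text \<open>Frechet (regular) subdifferential on R^(m x n):
  V is a Frechet subgradient at X iff liminf_{Y\<rightarrow>X} (f Y - f X - <V,Y-X>)/|Y-X| \<ge> 0.\<close>
definition frechet_subdiff :: "nat \<Rightarrow> nat \<Rightarrow> (real mat \<Rightarrow> ereal) \<Rightarrow> real mat \<Rightarrow> real mat set" where
  "frechet_subdiff m n f X = {V \<in> carrier_mat m n.
     X \<in> carrier_mat m n \<and> \<bar>f X\<bar> \<noteq> \<infinity> \<and>
     (\<forall>\<epsilon>>0. \<exists>\<delta>>0. \<forall>Y \<in> carrier_mat m n. frob_norm (Y - X) < \<delta> \<longrightarrow>
        f Y \<ge> ereal (real_of_ereal (f X) + frob_inner V (Y - X) - \<epsilon> * frob_norm (Y - X)))}"

definition limiting_subdiff :: "nat \<Rightarrow> nat \<Rightarrow> (real mat \<Rightarrow> ereal) \<Rightarrow> real mat \<Rightarrow> real mat set" where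
  "limiting_subdiff m n f X = {V \<in> carrier_mat m n.
     X \<in> carrier_mat m n \<and> \<bar>f X\<bar> \<noteq> \<infinity> \<and>
     (\<exists>Xs Vs. (\<forall>k. Xs k \<in> carrier_mat m n \<and> Vs k \<in> frechet_subdiff m n f (Xs k)) \<and>
        (\<lambda>k. frob_norm (Xs k - X)) \<longlonglongrightarrow> 0 \<and>
        (\<lambda>k. f (Xs k)) \<longlonglongrightarrow> f X \<and>
        (\<lambda>k. frob_norm (Vs k - V)) \<longlonglongrightarrow> 0)}"

end

(*
  The stationarity condition 0 \<in> \<partial>g(Q) is the same as the first-order condition
  "A Q^T is symmetric". Necessity: rotating two rows of a Stiefel point by a small angle
  stays on the manifold, so a Frechet subgradient V of g at X makes (V - A) X^T symmetric,
  and this passes to limiting subgradients. Sufficiency: if A Q^T is symmetric then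
  A = Q S with S symmetric, and <A, Y - Q> = -<S, (Y - Q)^T (Y - Q)>/2 on the manifold,
  a quadratic lower bound that makes 0 a Frechet subgradient.

  For the block matrix A = [D 0; 0 0] with D = diag(a) invertible, symmetry of A Q^T forces
  Q = [B 0; 0 V] with B orthogonal, V on the Stiefel manifold and B D symmetric. Then B
  commutes with D^2, hence is block diagonal along the groups of equal weights, and each
  diagonal block is a symmetric orthogonal matrix, i.e. U diag(q) U^T with q = +-1.
*)

theory Submission
  imports Defs "Jordan_Normal_Form.Determinant"
begin

lemma index_mult_mat_sum:
  assumes "A \<in> carrier_mat n m" "B \<in> carrier_mat m l" "i < n" "j < l"
  shows "(A * B) $$ (i,j) = (\<Sum>k<m. A $$ (i,k) * B $$ (k,j))"
  using assms by (simp add: scalar_prod_def atLeast0LessThan)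

lemma stiefel_carrier: "X \<in> stiefel m k \<Longrightarrow> X \<in> carrier_mat m k"
  by (simp add: stiefel_def)

lemma stiefel_col_inner:
  assumes "X \<in> stiefel d K" "l < K" "m < K"
  shows "(\<Sum>k<d. X $$ (k,l) * X $$ (k,m)) = (if l = m then 1 else 0)"
proof -
  have X: "X \<in> carrier_mat d K" and XX: "X\<^sup>T * X = 1\<^sub>m K" using assms by (auto simp: stiefel_def)
  have "(X\<^sup>T * X) $$ (l,m) = (\<Sum>k<d. X $$ (k,l) * X $$ (k,m))"
    using index_mult_mat_sum[of "X\<^sup>T" K d X K l m] X assms by simp
  then show ?thesis using XX assms by simp
qed

lemma stiefelI_col_inner:
  assumes X: "X \<in> carrier_mat d K"
    and cols: "\<And>l m. l < K \<Longrightarrow> m < K \<Longrightarrow> (\<Sum>k<d. X $$ (k,l) * X $$ (k,m)) = (if l = m then 1 else 0)"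
  shows "X \<in> stiefel d K"
proof -
  have "X\<^sup>T * X = 1\<^sub>m K"
  proof (rule eq_matI)
    fix l m assume "l < dim_row (1\<^sub>m K)" "m < dim_col (1\<^sub>m K)"
    then have l: "l < K" and m: "m < K" by auto
    have "(X\<^sup>T * X) $$ (l,m) = (\<Sum>k<d. X $$ (k,l) * X $$ (k,m))"
      using index_mult_mat_sum[of "X\<^sup>T" K d X K l m] X l m by simp
    then show "(X\<^sup>T * X) $$ (l,m) = 1\<^sub>m K $$ (l,m)" using cols[OF l m] l m by simp
  qed (use X in auto)
  then show ?thesis using X by (simp add: stiefel_def)
qed

lemma stiefel_square_mult_transpose:
  assumes "U \<in> stiefel n n"
  shows "U * U\<^sup>T = 1\<^sub>m n"
  using assms mat_mult_left_right_inverse[of "U\<^sup>T" n U] by (simp add: stiefel_def)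

lemma split_block_four_block_mat:
  assumes "A \<in> carrier_mat n1 m1" "B \<in> carrier_mat n1 m2" "C \<in> carrier_mat n2 m1" "D \<in> carrier_mat n2 m2"
  shows "split_block (four_block_mat A B C D) n1 m1 = (A, B, C, D)"
  using assms unfolding split_block_def Let_def by (auto intro!: eq_matI)

lemma four_block_mat_inject:
  assumes "A \<in> carrier_mat n1 m1" "B \<in> carrier_mat n1 m2" "C \<in> carrier_mat n2 m1" "D \<in> carrier_mat n2 m2"
    and "A' \<in> carrier_mat n1 m1" "B' \<in> carrier_mat n1 m2" "C' \<in> carrier_mat n2 m1" "D' \<in> carrier_mat n2 m2"
    and "four_block_mat A B C D = four_block_mat A' B' C' D'"
  shows "A = A' \<and> B = B' \<and> C = C' \<and> D = D'"
  using arg_cong[where f = "\<lambda>M. split_block M n1 m1", OF assms(9)]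
  by (simp add: split_block_four_block_mat[OF assms(1-4)] split_block_four_block_mat[OF assms(5-8)])

lemma four_block_mult_transpose:
  assumes "B \<in> carrier_mat n1 m1" "C \<in> carrier_mat n1 m2" "E \<in> carrier_mat n2 m1" "V \<in> carrier_mat n2 m2"
  shows "(four_block_mat B C E V)\<^sup>T * four_block_mat B C E V
    = four_block_mat (B\<^sup>T * B + E\<^sup>T * E) (B\<^sup>T * C + E\<^sup>T * V) (C\<^sup>T * B + V\<^sup>T * E) (C\<^sup>T * C + V\<^sup>T * V)"
  using assms by (simp add: transpose_four_block_mat mult_four_block_mat[of _ m1 n1 _ n2 _ m2])

lemma diagm_carrier [simp]: "diagm n a \<in> carrier_mat n n"
  and dim_diagm [simp]: "dim_row (diagm n a) = n" "dim_col (diagm n a) = n"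
  by (simp_all add: diagm_def)

lemma transpose_diagm [simp]: "(diagm n a)\<^sup>T = diagm n a"
  by (rule eq_matI) (auto simp: diagm_def)

lemma index_diagm_mult:
  assumes "M \<in> carrier_mat n m" "i < n" "j < m"
  shows "(diagm n a * M) $$ (i,j) = a i * M $$ (i,j)"
proof -
  have "(diagm n a * M) $$ (i,j) = (\<Sum>k<n. diagm n a $$ (i,k) * M $$ (k,j))"
    using assms by (intro index_mult_mat_sum) auto
  also have "\<dots> = (\<Sum>k<n. (if k = i then a i * M $$ (i,j) else 0))"
    using assms(2) by (intro sum.cong) (auto simp: diagm_def)
  finally show ?thesis using assms(2) by simp
qed

lemma index_mult_diagm:
  assumes "M \<in> carrier_mat m n" "i < m" "j < n"
  shows "(M * diagm n a) $$ (i,j) = M $$ (i,j) * a j"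
proof -
  have "(M * diagm n a) $$ (i,j) = (\<Sum>k<n. M $$ (i,k) * diagm n a $$ (k,j))"
    using assms by (intro index_mult_mat_sum) auto
  also have "\<dots> = (\<Sum>k<n. (if k = j then M $$ (i,j) * a j else 0))"
    using assms(3) by (intro sum.cong) (auto simp: diagm_def)
  finally show ?thesis using assms(3) by simp
qed

lemma diagm_mult_diagm: "diagm n a * diagm n b = diagm n (\<lambda>i. a i * b i)"
proof (rule eq_matI)
  fix i j assume "i < dim_row (diagm n (\<lambda>i. a i * b i))" "j < dim_col (diagm n (\<lambda>i. a i * b i))"
  then show "(diagm n a * diagm n b) $$ (i,j) = diagm n (\<lambda>i. a i * b i) $$ (i,j)"
    using index_diagm_mult[OF diagm_carrier, of i n j a b] by (simp add: diagm_def)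
qed (simp_all add: diagm_def)

lemma diagm_cancel_left:
  assumes "\<And>i. i < n \<Longrightarrow> a i \<noteq> 0" and "X \<in> carrier_mat n m" and "diagm n a * X = 0\<^sub>m n m"
  shows "X = 0\<^sub>m n m"
proof -
  have inv: "diagm n (\<lambda>i. inverse (a i)) * diagm n a = 1\<^sub>m n"
    unfolding diagm_mult_diagm using assms(1) by (auto simp: diagm_def intro!: eq_matI)
  have "X = (diagm n (\<lambda>i. inverse (a i)) * diagm n a) * X" using inv assms(2) by simp
  also have "\<dots> = diagm n (\<lambda>i. inverse (a i)) * (diagm n a * X)"
    by (rule assoc_mult_mat[OF diagm_carrier diagm_carrier assms(2)])
  finally show ?thesis using assms(3) by simp
qed

lemma index_conj_diagm:
  assumes U: "U \<in> carrier_mat n n" and ij: "i < n" "j < n"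
  shows "(U * diagm n q * U\<^sup>T) $$ (i,j) = (\<Sum>k<n. U $$ (i,k) * q k * U $$ (j,k))"
proof -
  have "(U * diagm n q * U\<^sup>T) $$ (i,j) = (\<Sum>k<n. (U * diagm n q) $$ (i,k) * U\<^sup>T $$ (k,j))"
    using U ij by (intro index_mult_mat_sum) auto
  also have "\<dots> = (\<Sum>k<n. U $$ (i,k) * q k * U $$ (j,k))"
    using U ij by (intro sum.cong refl) (simp add: index_mult_diagm del: index_mult_mat)
  finally show ?thesis .
qed

lemma blkdiag_carrier:
  assumes "\<And>b. b \<in> set bs \<Longrightarrow> F b \<in> carrier_mat (n b) (n b)"
  shows "blkdiag (map F bs) \<in> carrier_mat (sum_list (map n bs)) (sum_list (map n bs))"
  using assms by (induction bs) auto

lemma dim_blkdiag: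
  "dim_row (blkdiag Ms) = sum_list (map dim_row Ms)" "dim_col (blkdiag Ms) = sum_list (map dim_col Ms)"
  by (induction Ms) auto

lemma blkdiag_mult:
  assumes "\<And>b. b \<in> set bs \<Longrightarrow> F b \<in> carrier_mat (n b) (n b)"
    and "\<And>b. b \<in> set bs \<Longrightarrow> G b \<in> carrier_mat (n b) (n b)"
  shows "blkdiag (map F bs) * blkdiag (map G bs) = blkdiag (map (\<lambda>b. F b * G b) bs)"
  using assms
proof (induction bs)
  case (Cons b bs)
  let ?N = "sum_list (map n bs)"
  have F: "F b \<in> carrier_mat (n b) (n b)" and G: "G b \<in> carrier_mat (n b) (n b)"
    and BF: "blkdiag (map F bs) \<in> carrier_mat ?N ?N" and BG: "blkdiag (map G bs) \<in> carrier_mat ?N ?N"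
    using Cons.prems by (auto intro!: blkdiag_carrier)
  have "blkdiag (map (\<lambda>b. F b * G b) bs) \<in> carrier_mat ?N ?N"
    by (rule blkdiag_carrier) (metis Cons.prems list.set_intros(2) mult_carrier_mat)
  moreover have "dim_row (F b) = n b" "dim_col (F b) = n b" "dim_row (G b) = n b" "dim_col (G b) = n b"
    "F b * G b \<in> carrier_mat (n b) (n b)"
    using F G by auto
  ultimately show ?case using BF BG Cons
    by (simp add: mult_four_block_mat[OF F zero_carrier_mat zero_carrier_mat BF G zero_carrier_mat
          zero_carrier_mat BG])
qed simp

lemma blkdiag_transpose:
  assumes "\<And>b. b \<in> set bs \<Longrightarrow> F b \<in> carrier_mat (n b) (n b)"
  shows "(blkdiag (map F bs))\<^sup>T = blkdiag (map (\<lambda>b. (F b)\<^sup>T) bs)"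
  using assms
proof (induction bs)
  case (Cons b bs)
  let ?N = "sum_list (map n bs)"
  have F: "F b \<in> carrier_mat (n b) (n b)" and BF: "blkdiag (map F bs) \<in> carrier_mat ?N ?N"
    and "blkdiag (map (\<lambda>b. (F b)\<^sup>T) bs) \<in> carrier_mat ?N ?N"
    using Cons.prems by (auto intro!: blkdiag_carrier)
  moreover have "dim_row (F b) = n b" "dim_col (F b) = n b" using F by auto
  ultimately show ?case using Cons
    by (simp add: transpose_four_block_mat[OF F zero_carrier_mat zero_carrier_mat BF])
qed simp

lemma blkdiag_one: "blkdiag (map (\<lambda>b. 1\<^sub>m (n b)) bs) = 1\<^sub>m (sum_list (map n bs))"
proof (induction bs)
  case Nil
  show ?case by (rule eq_matI) auto
qed simp

lemma index_blkdiag: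
  assumes "\<And>M. M \<in> set Ms \<Longrightarrow> dim_col M = dim_row M"
    and "b < length Ms" "b' < length Ms" "i < dim_row (Ms ! b)" "j < dim_row (Ms ! b')"
  shows "blkdiag Ms $$ (sum_list (map dim_row (take b Ms)) + i, sum_list (map dim_row (take b' Ms)) + j)
    = (if b = b' then Ms ! b $$ (i,j) else 0)"
  using assms
proof (induction Ms arbitrary: b b')
  case (Cons M Ms)
  have dims: "dim_col M = dim_row M" "dim_row (blkdiag Ms) = sum_list (map dim_row Ms)"
    "dim_col (blkdiag Ms) = sum_list (map dim_row Ms)"
    using Cons.prems(1) by (auto simp: dim_blkdiag intro!: arg_cong[where f = sum_list])
  have off_le: "sum_list (map dim_row (take c Ms)) + k < sum_list (map dim_row Ms)"
    if "c < length Ms" "k < dim_row (Ms ! c)" for c k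
  proof -
    have "sum_list (map dim_row Ms) = sum_list (map dim_row (take c Ms)) + sum_list (map dim_row (drop c Ms))"
      by (simp flip: sum_list_append map_append)
    also have "sum_list (map dim_row (drop c Ms)) = dim_row (Ms ! c) + sum_list (map dim_row (drop (Suc c) Ms))"
      using that(1) by (simp add: Cons_nth_drop_Suc[symmetric])
    finally show ?thesis using that(2) by simp
  qed
  show ?case
  proof (cases b; cases b')
    fix c c' assume "b = Suc c" "b' = Suc c'"
    then show ?thesis
      using Cons.IH[of c c'] Cons.prems off_le[of c] off_le[of c'] dims by simp
  qed (use Cons.prems off_le dims in auto)
qed simp

lemma frob_inner_carrier:
  assumes "A \<in> carrier_mat m n"
  shows "frob_inner A B = (\<Sum>i<m. \<Sum>j<n. A $$ (i,j) * B $$ (i,j))"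
  using assms by (simp add: frob_inner_def)

lemma frob_inner_diff_right:
  assumes "A \<in> carrier_mat m n" "X \<in> carrier_mat m n" "Y \<in> carrier_mat m n"
  shows "frob_inner A (Y - X) = frob_inner A Y - frob_inner A X"
  using assms by (simp add: frob_inner_def sum_subtractf[symmetric] right_diff_distrib)

lemma frob_inner_diff_left:
  assumes "V \<in> carrier_mat m n" "A \<in> carrier_mat m n" "Z \<in> carrier_mat m n"
  shows "frob_inner (V - A) Z = frob_inner V Z - frob_inner A Z"
  using assms by (simp add: frob_inner_def sum_subtractf[symmetric] left_diff_distrib)

lemma frob_inner_self_nonneg: "0 \<le> frob_inner X X"
  by (auto simp: frob_inner_def intro!: sum_nonneg)

lemma frob_norm_nonneg: "0 \<le> frob_norm X"
  by (simp add: frob_norm_def frob_inner_self_nonneg)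

lemma abs_index_le_frob_norm:
  assumes "X \<in> carrier_mat m n" "i < m" "j < n"
  shows "\<bar>X $$ (i,j)\<bar> \<le> frob_norm X"
proof -
  have "X $$ (i,j) * X $$ (i,j) \<le> (\<Sum>l<n. X $$ (i,l) * X $$ (i,l))"
    using assms by (intro member_le_sum[of j "{..<n}" "\<lambda>l. X $$ (i,l) * X $$ (i,l)"]) auto
  also have "\<dots> \<le> (\<Sum>k<m. \<Sum>l<n. X $$ (k,l) * X $$ (k,l))"
    using assms by (intro member_le_sum[of i "{..<m}" "\<lambda>k. \<Sum>l<n. X $$ (k,l) * X $$ (k,l)"])
      (auto intro: sum_nonneg)
  finally have "X $$ (i,j) * X $$ (i,j) \<le> (\<Sum>k<m. \<Sum>l<n. X $$ (k,l) * X $$ (k,l))" .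
  then have "sqrt (X $$ (i,j) * X $$ (i,j)) \<le> sqrt (\<Sum>k<m. \<Sum>l<n. X $$ (k,l) * X $$ (k,l))"
    by (intro real_sqrt_le_mono) simp
  then show ?thesis using assms by (simp add: frob_norm_def frob_inner_def)
qed

lemma tendsto_index_mat:
  assumes "\<And>k. Xs k \<in> carrier_mat m n" "X \<in> carrier_mat m n"
    and "(\<lambda>k. frob_norm (Xs k - X)) \<longlonglongrightarrow> 0" "i < m" "j < n"
  shows "(\<lambda>k. Xs k $$ (i,j)) \<longlonglongrightarrow> X $$ (i,j)"
proof -
  have "\<bar>Xs k $$ (i,j) - X $$ (i,j)\<bar> \<le> frob_norm (Xs k - X)" for k
    using abs_index_le_frob_norm[OF minus_carrier_mat[OF assms(2)] assms(4,5), of "Xs k"] assms(2,4,5)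
    by simp
  then have "(\<lambda>k. Xs k $$ (i,j) - X $$ (i,j)) \<longlonglongrightarrow> 0"
    by (intro tendsto_0_le[OF assms(3), of _ 1]) (simp add: always_eventually abs_of_nonneg frob_norm_nonneg)
  then show ?thesis by (simp add: LIM_zero_iff)
qed

lemma frob_inner_mult_left:
  assumes "Q \<in> carrier_mat n m" "S \<in> carrier_mat m l" "Z \<in> carrier_mat n l"
  shows "frob_inner (Q * S) Z = frob_inner S (Q\<^sup>T * Z)"
proof -
  have "frob_inner (Q * S) Z = (\<Sum>k<n. \<Sum>j<l. \<Sum>i<m. Q $$ (k,i) * S $$ (i,j) * Z $$ (k,j))"
    using assms by (simp add: frob_inner_carrier[of _ n l] scalar_prod_def atLeast0LessThan sum_distrib_right)
  also have "\<dots> = (\<Sum>k<n. \<Sum>i<m. \<Sum>j<l. Q $$ (k,i) * S $$ (i,j) * Z $$ (k,j))"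
    by (rule sum.cong[OF refl], rule sum.swap)
  also have "\<dots> = (\<Sum>i<m. \<Sum>k<n. \<Sum>j<l. Q $$ (k,i) * S $$ (i,j) * Z $$ (k,j))"
    by (rule sum.swap)
  also have "\<dots> = (\<Sum>i<m. \<Sum>j<l. \<Sum>k<n. Q $$ (k,i) * S $$ (i,j) * Z $$ (k,j))"
    by (rule sum.cong[OF refl], rule sum.swap)
  also have "\<dots> = frob_inner S (Q\<^sup>T * Z)"
    using assms by (simp add: frob_inner_carrier[of _ m l] scalar_prod_def atLeast0LessThan
        sum_distrib_left mult_ac)
  finally show ?thesis .
qed

lemma abs_gram_index_le:
  assumes Z: "Z \<in> carrier_mat d K" and ml: "m < K" "l < K"
  shows "\<bar>(Z\<^sup>T * Z) $$ (m,l)\<bar> \<le> frob_inner Z Z"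
proof -
  have col: "(\<Sum>k<d. Z $$ (k,j) * Z $$ (k,j)) \<le> frob_inner Z Z" if "j < K" for j
    unfolding frob_inner_carrier[OF Z] using that
    by (intro sum_mono member_le_sum[of j "{..<K}" "\<lambda>l. Z $$ (_,l) * Z $$ (_,l)"]) auto
  have "\<bar>(Z\<^sup>T * Z) $$ (m,l)\<bar> \<le> (\<Sum>k<d. \<bar>Z $$ (k,m) * Z $$ (k,l)\<bar>)"
    using Z ml by (simp add: scalar_prod_def atLeast0LessThan)
  also have "\<dots> \<le> (\<Sum>k<d. (Z $$ (k,m) * Z $$ (k,m) + Z $$ (k,l) * Z $$ (k,l)) / 2)"
  proof (rule sum_mono)
    fix k
    have "0 \<le> (\<bar>Z $$ (k,m)\<bar> - \<bar>Z $$ (k,l)\<bar>)\<^sup>2" by simp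
    then show "\<bar>Z $$ (k,m) * Z $$ (k,l)\<bar> \<le> (Z $$ (k,m) * Z $$ (k,m) + Z $$ (k,l) * Z $$ (k,l)) / 2"
      by (simp add: power2_eq_square algebra_simps abs_mult)
  qed
  also have "\<dots> \<le> frob_inner Z Z"
    using col[OF ml(1)] col[OF ml(2)] by (simp add: sum.distrib sum_divide_distrib[symmetric])
  finally show ?thesis .
qed

lemma abs_frob_inner_le:
  assumes S: "S \<in> carrier_mat m n" and bound: "\<And>i j. i < m \<Longrightarrow> j < n \<Longrightarrow> \<bar>M $$ (i,j)\<bar> \<le> b"
  shows "\<bar>frob_inner S M\<bar> \<le> (\<Sum>i<m. \<Sum>j<n. \<bar>S $$ (i,j)\<bar>) * b"
proof -
  have "\<bar>frob_inner S M\<bar> \<le> (\<Sum>i<m. \<Sum>j<n. \<bar>S $$ (i,j)\<bar> * \<bar>M $$ (i,j)\<bar>)"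
    unfolding frob_inner_carrier[OF S]
    by (rule order.trans[OF sum_abs sum_mono], rule order.trans[OF sum_abs]) (simp add: abs_mult)
  also have "\<dots> \<le> (\<Sum>i<m. \<Sum>j<n. \<bar>S $$ (i,j)\<bar> * b)"
    by (intro sum_mono mult_left_mono bound) auto
  finally show ?thesis by (simp add: sum_distrib_right)
qed

section \<open>The Frechet normal cone of the Stiefel manifold\<close>

lemma sum_two_elements:
  fixes n :: nat
  assumes "i < n" "j < n" "i \<noteq> j" "\<And>k. k < n \<Longrightarrow> k \<noteq> i \<Longrightarrow> k \<noteq> j \<Longrightarrow> f k = 0"
  shows "(\<Sum>k<n. f k) = f i + f j"
proof -
  have "(\<Sum>k<n. f k) = (\<Sum>k\<in>{i,j}. f k)"
    using assms by (intro sum.mono_neutral_right) auto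
  then show ?thesis using assms(3) by simp
qed

definition rotate_rows :: "nat \<Rightarrow> nat \<Rightarrow> real \<Rightarrow> real \<Rightarrow> real mat \<Rightarrow> real mat" where
  "rotate_rows i j c s X = mat (dim_row X) (dim_col X) (\<lambda>(k,l).
     if k = i then c * X $$ (i,l) - s * X $$ (j,l)
     else if k = j then s * X $$ (i,l) + c * X $$ (j,l) else X $$ (k,l))"

lemma rotate_rows_stiefel:
  assumes X: "X \<in> stiefel d K" and ij: "i < d" "j < d" "i \<noteq> j" and cs: "c\<^sup>2 + s\<^sup>2 = 1"
  shows "rotate_rows i j c s X \<in> stiefel d K"
proof (rule stiefelI_col_inner)
  let ?Y = "rotate_rows i j c s X"
  have Xc: "X \<in> carrier_mat d K" using X by (rule stiefel_carrier)
  then show "?Y \<in> carrier_mat d K" by (simp add: rotate_rows_def)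
  fix l m assume l: "l < K" and m: "m < K"
  have "(\<Sum>k<d. ?Y $$ (k,l) * ?Y $$ (k,m) - X $$ (k,l) * X $$ (k,m))
      = (c\<^sup>2 + s\<^sup>2 - 1) * (X $$ (i,l) * X $$ (i,m) + X $$ (j,l) * X $$ (j,m))"
    using Xc l m ij
    by (subst sum_two_elements[OF ij]) (auto simp: rotate_rows_def power2_eq_square algebra_simps)
  then have "(\<Sum>k<d. ?Y $$ (k,l) * ?Y $$ (k,m)) = (\<Sum>k<d. X $$ (k,l) * X $$ (k,m))"
    using cs by (simp add: sum_subtractf)
  then show "(\<Sum>k<d. ?Y $$ (k,l) * ?Y $$ (k,m)) = (if l = m then 1 else 0)"
    using stiefel_col_inner[OF X l m] by simp
qed

lemma frob_inner_rotate_rows_diff: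
  assumes X: "X \<in> carrier_mat d K" and W: "W \<in> carrier_mat d K" and ij: "i < d" "j < d" "i \<noteq> j"
  shows "frob_inner W (rotate_rows i j c s X - X) =
    (c - 1) * (\<Sum>l<K. W $$ (i,l) * X $$ (i,l) + W $$ (j,l) * X $$ (j,l))
    + s * ((W * X\<^sup>T) $$ (j,i) - (W * X\<^sup>T) $$ (i,j))"
proof -
  have "frob_inner W (rotate_rows i j c s X - X)
      = (\<Sum>l<K. W $$ (i,l) * ((c - 1) * X $$ (i,l) - s * X $$ (j,l)))
        + (\<Sum>l<K. W $$ (j,l) * (s * X $$ (i,l) + (c - 1) * X $$ (j,l)))"
    unfolding frob_inner_carrier[OF W] using X W ij
    by (subst sum_two_elements[OF ij])
      (auto simp: rotate_rows_def algebra_simps intro!: sum.cong)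
  also have "\<dots> = (c - 1) * (\<Sum>l<K. W $$ (i,l) * X $$ (i,l) + W $$ (j,l) * X $$ (j,l))
      + s * ((\<Sum>l<K. W $$ (j,l) * X $$ (i,l)) - (\<Sum>l<K. W $$ (i,l) * X $$ (j,l)))"
    by (simp add: algebra_simps sum.distrib sum_subtractf sum_distrib_left)
  also have "(\<Sum>l<K. W $$ (j,l) * X $$ (i,l)) = (W * X\<^sup>T) $$ (j,i)"
    using index_mult_mat_sum[of W d K "X\<^sup>T" d j i] W X ij by simp
  also have "(\<Sum>l<K. W $$ (i,l) * X $$ (j,l)) = (W * X\<^sup>T) $$ (i,j)"
    using index_mult_mat_sum[of W d K "X\<^sup>T" d i j] W X ij by simp
  finally show ?thesis .
qed

lemma frob_norm_rotate_rows_diff: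
  assumes X: "X \<in> carrier_mat d K" and ij: "i < d" "j < d" "i \<noteq> j" and cs: "c\<^sup>2 + s\<^sup>2 = 1"
  shows "frob_norm (rotate_rows i j c s X - X) = sqrt ((2 - 2 * c) * (\<Sum>l<K. (X $$ (i,l))\<^sup>2 + (X $$ (j,l))\<^sup>2))"
proof -
  have "frob_inner (rotate_rows i j c s X - X) (rotate_rows i j c s X - X)
      = (\<Sum>l<K. ((c - 1)\<^sup>2 + s\<^sup>2) * ((X $$ (i,l))\<^sup>2 + (X $$ (j,l))\<^sup>2))"
    using X ij unfolding frob_inner_carrier[OF minus_carrier_mat[OF X]]
    by (subst sum_two_elements[OF ij])
      (auto simp: rotate_rows_def power2_eq_square algebra_simps sum.distrib[symmetric] intro!: sum.cong)
  also have "(c - 1)\<^sup>2 + s\<^sup>2 = 2 - 2 * c"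
    using cs by (simp add: power2_eq_square algebra_simps)
  finally show ?thesis by (simp add: frob_norm_def sum_distrib_left)
qed

lemma sqrt_one_minus_square_bounds:
  fixes t :: real
  assumes "0 \<le> t" "t \<le> 1"
  shows "0 \<le> 1 - sqrt (1 - t\<^sup>2)" "1 - sqrt (1 - t\<^sup>2) \<le> t\<^sup>2"
proof -
  have t2: "t\<^sup>2 \<le> 1" using assms by (simp add: power_le_one)
  have "(1 - t\<^sup>2)\<^sup>2 \<le> 1 - t\<^sup>2"
    using t2 mult_left_le[of "1 - t\<^sup>2" "1 - t\<^sup>2"] by (simp add: power2_eq_square[of "1 - t\<^sup>2"])
  then have "1 - t\<^sup>2 \<le> sqrt (1 - t\<^sup>2)" using t2 by (intro real_le_rsqrt)
  then show "0 \<le> 1 - sqrt (1 - t\<^sup>2)" "1 - sqrt (1 - t\<^sup>2) \<le> t\<^sup>2" using t2 by auto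
qed

lemma rotate_rows_small_angle:
  assumes X: "X \<in> stiefel d K" and W: "W \<in> carrier_mat d K" and ij: "i < d" "j < d" "i \<noteq> j"
    and t: "0 \<le> t" "t \<le> 1"
  defines "Y \<equiv> rotate_rows i j (sqrt (1 - t\<^sup>2)) t X"
  shows "Y \<in> stiefel d K"
    and "frob_norm (Y - X) \<le> t * sqrt (2 * (\<Sum>l<K. (X $$ (i,l))\<^sup>2 + (X $$ (j,l))\<^sup>2))"
    and "t * ((W * X\<^sup>T) $$ (j,i) - (W * X\<^sup>T) $$ (i,j))
      - t\<^sup>2 * \<bar>\<Sum>l<K. W $$ (i,l) * X $$ (i,l) + W $$ (j,l) * X $$ (j,l)\<bar> \<le> frob_inner W (Y - X)"
proof -
  let ?c = "sqrt (1 - t\<^sup>2)" and ?T = "\<Sum>l<K. W $$ (i,l) * X $$ (i,l) + W $$ (j,l) * X $$ (j,l)"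
  have Xc: "X \<in> carrier_mat d K" using X by (rule stiefel_carrier)
  have cs: "?c\<^sup>2 + t\<^sup>2 = 1" using t by (simp add: power_le_one)
  note c = sqrt_one_minus_square_bounds[OF t]
  show "Y \<in> stiefel d K" unfolding Y_def by (rule rotate_rows_stiefel[OF X ij cs])
  have "frob_norm (Y - X) \<le> sqrt ((2 * t\<^sup>2) * (\<Sum>l<K. (X $$ (i,l))\<^sup>2 + (X $$ (j,l))\<^sup>2))"
    unfolding Y_def frob_norm_rotate_rows_diff[OF Xc ij cs]
    using c by (intro real_sqrt_le_mono mult_right_mono sum_nonneg) auto
  then show "frob_norm (Y - X) \<le> t * sqrt (2 * (\<Sum>l<K. (X $$ (i,l))\<^sup>2 + (X $$ (j,l))\<^sup>2))"
    using t by (simp add: real_sqrt_mult algebra_simps)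
  have "(1 - ?c) * ?T \<le> (1 - ?c) * \<bar>?T\<bar>" using c by (intro mult_left_mono) auto
  also have "\<dots> \<le> t\<^sup>2 * \<bar>?T\<bar>" using c by (intro mult_right_mono) auto
  finally show "t * ((W * X\<^sup>T) $$ (j,i) - (W * X\<^sup>T) $$ (i,j)) - t\<^sup>2 * \<bar>?T\<bar> \<le> frob_inner W (Y - X)"
    unfolding Y_def frob_inner_rotate_rows_diff[OF Xc W ij] by (simp add: algebra_simps)
qed

lemma frechet_normal_rotation_le:
  assumes X: "X \<in> stiefel d K" and W: "W \<in> carrier_mat d K" and ij: "i < d" "j < d" "i \<noteq> j"
    and normal: "\<forall>\<epsilon>>0. \<exists>\<delta>>0. \<forall>Y\<in>stiefel d K. frob_norm (Y - X) < \<delta> \<longrightarrow>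
      frob_inner W (Y - X) \<le> \<epsilon> * frob_norm (Y - X)"
  shows "(W * X\<^sup>T) $$ (j,i) \<le> (W * X\<^sup>T) $$ (i,j)"
proof -
  define T where "T = (\<Sum>l<K. W $$ (i,l) * X $$ (i,l) + W $$ (j,l) * X $$ (j,l))"
  define D where "D = (W * X\<^sup>T) $$ (j,i) - (W * X\<^sup>T) $$ (i,j)"
  define R where "R = sqrt (2 * (\<Sum>l<K. (X $$ (i,l))\<^sup>2 + (X $$ (j,l))\<^sup>2)) + 1"
  define Y where "Y t = rotate_rows i j (sqrt (1 - t\<^sup>2)) t X" for t :: real
  have "0 \<le> (\<Sum>l<K. (X $$ (i,l))\<^sup>2 + (X $$ (j,l))\<^sup>2)" by (intro sum_nonneg) simp
  then have R: "R > 0" unfolding R_def by (simp add: add_nonneg_pos)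
  text \<open>Along the rotations \<open>Y t\<close>, the pairing with \<open>W\<close> is \<open>t D + O(t\<^sup>2)\<close> while the
    distance to \<open>X\<close> is \<open>O(t)\<close>; the normal-cone inequality then forces \<open>D \<le> 0\<close>.\<close>
  have "D \<le> e" if e: "e > 0" for e
  proof -
    obtain \<delta> where \<delta>: "\<delta> > 0" and near: "\<And>Y. Y \<in> stiefel d K \<Longrightarrow> frob_norm (Y - X) < \<delta> \<Longrightarrow>
        frob_inner W (Y - X) \<le> (e / R) * frob_norm (Y - X)"
      using normal e R by (meson divide_pos_pos)
    have "D \<le> e + t * \<bar>T\<bar>" if t: "0 < t" "t < min 1 (\<delta> / R)" for t
    proof -
      note rot = rotate_rows_small_angle[OF X W ij, of t, folded Y_def T_def D_def]
      have norm: "frob_norm (Y t - X) \<le> t * R"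
        using rot(2) t by (smt (verit) R_def mult_left_mono)
      have "t * D - t\<^sup>2 * \<bar>T\<bar> \<le> (e / R) * frob_norm (Y t - X)"
        using rot(1,3) near norm t R by (smt (verit) pos_less_divide_eq)
      also have "\<dots> \<le> (e / R) * (t * R)"
        using norm e R by (intro mult_left_mono) auto
      finally have "t * D \<le> t * (e + t * \<bar>T\<bar>)"
        using R by (simp add: power2_eq_square algebra_simps)
      then show ?thesis using t by simp
    qed
    then have "\<forall>\<^sub>F t in at_right 0. D \<le> e + t * \<bar>T\<bar>"
      using eventually_at_right_real[of 0 "min 1 (\<delta> / R)"] \<delta> R
      by (auto elim: eventually_mono)
    moreover have "((\<lambda>t. e + t * \<bar>T\<bar>) \<longlongrightarrow> e) (at_right 0)"
      by (intro tendsto_eq_intros tendsto_ident_at) auto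
    ultimately show "D \<le> e"
      using tendsto_le[OF trivial_limit_at_right_real] tendsto_const by blast
  qed
  then have "D \<le> 0" by (rule dense_ge)
  then show ?thesis by (simp add: D_def)
qed

lemma frechet_normal_stiefel_symmetric:
  assumes X: "X \<in> stiefel d K" and W: "W \<in> carrier_mat d K"
    and normal: "\<forall>\<epsilon>>0. \<exists>\<delta>>0. \<forall>Y\<in>stiefel d K. frob_norm (Y - X) < \<delta> \<longrightarrow>
      frob_inner W (Y - X) \<le> \<epsilon> * frob_norm (Y - X)"
  shows "W * X\<^sup>T = X * W\<^sup>T"
proof -
  have Xc: "X \<in> carrier_mat d K" using X by (rule stiefel_carrier)
  have "W * X\<^sup>T = (W * X\<^sup>T)\<^sup>T"
  proof (rule eq_matI)
    fix i j assume "i < dim_row ((W * X\<^sup>T)\<^sup>T)" "j < dim_col ((W * X\<^sup>T)\<^sup>T)"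
    then have ij: "i < d" "j < d" using W Xc by auto
    show "(W * X\<^sup>T) $$ (i,j) = (W * X\<^sup>T)\<^sup>T $$ (i,j)"
    proof (cases "i = j")
      case False
      have "(W * X\<^sup>T) $$ (i,j) = (W * X\<^sup>T) $$ (j,i)"
        using frechet_normal_rotation_le[OF X W ij False normal]
          frechet_normal_rotation_le[OF X W ij(2,1) _ normal] False by simp
      then show ?thesis using ij W Xc by simp
    qed (use ij W Xc in auto)
  qed (use W Xc in auto)
  also have "\<dots> = X * W\<^sup>T" using W Xc by (simp add: transpose_mult)
  finally show ?thesis .
qed

section \<open>Stationary points of a linear function on the Stiefel manifold\<close>

lemma frechet_subdiff_linear_stiefel:
  assumes g: "\<And>X. g X = ereal (frob_inner A X) + indicator_fun (stiefel d K) X"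
    and A: "A \<in> carrier_mat d K" and V: "V \<in> frechet_subdiff d K g X"
  shows "X \<in> stiefel d K \<and> (V - A) * X\<^sup>T = X * (V - A)\<^sup>T"
proof -
  have Vc: "V \<in> carrier_mat d K" and fin: "\<bar>g X\<bar> \<noteq> \<infinity>"
    and frechet: "\<forall>\<epsilon>>0. \<exists>\<delta>>0. \<forall>Y \<in> carrier_mat d K. frob_norm (Y - X) < \<delta> \<longrightarrow>
        g Y \<ge> ereal (real_of_ereal (g X) + frob_inner V (Y - X) - \<epsilon> * frob_norm (Y - X))"
    using V by (auto simp: frechet_subdiff_def)
  have g_stiefel: "g Y = ereal (frob_inner A Y)" if "Y \<in> stiefel d K" for Y
    using that by (simp add: g indicator_fun_def)
  have X: "X \<in> stiefel d K"
    using fin by (auto simp: g indicator_fun_def split: if_splits)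
  have Xc: "X \<in> carrier_mat d K" using X by (rule stiefel_carrier)
  have "\<forall>\<epsilon>>0. \<exists>\<delta>>0. \<forall>Y\<in>stiefel d K. frob_norm (Y - X) < \<delta> \<longrightarrow>
      frob_inner (V - A) (Y - X) \<le> \<epsilon> * frob_norm (Y - X)"
  proof (intro allI impI)
    fix \<epsilon> :: real assume "\<epsilon> > 0"
    with frechet obtain \<delta> where "\<delta> > 0" and near: "\<forall>Y \<in> carrier_mat d K. frob_norm (Y - X) < \<delta> \<longrightarrow>
        g Y \<ge> ereal (real_of_ereal (g X) + frob_inner V (Y - X) - \<epsilon> * frob_norm (Y - X))"
      by blast
    have "frob_inner (V - A) (Y - X) \<le> \<epsilon> * frob_norm (Y - X)"
      if Y: "Y \<in> stiefel d K" and "frob_norm (Y - X) < \<delta>" for Y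
    proof -
      have Yc: "Y \<in> carrier_mat d K" using Y by (rule stiefel_carrier)
      have "frob_inner A X + frob_inner V (Y - X) - \<epsilon> * frob_norm (Y - X) \<le> frob_inner A Y"
        using near Yc that g_stiefel[OF Y] g_stiefel[OF X] by auto
      then show ?thesis
        using frob_inner_diff_left[OF Vc A minus_carrier_mat[OF Xc]] frob_inner_diff_right[OF A Xc Yc]
        by simp
    qed
    with \<open>\<delta> > 0\<close> show "\<exists>\<delta>>0. \<forall>Y\<in>stiefel d K. frob_norm (Y - X) < \<delta> \<longrightarrow>
        frob_inner (V - A) (Y - X) \<le> \<epsilon> * frob_norm (Y - X)" by blast
  qed
  then show ?thesis
    using frechet_normal_stiefel_symmetric[OF X minus_carrier_mat[OF A]] X by blast
qed

lemma limiting_stationary_imp_symmetric: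
  assumes g: "\<And>X. g X = ereal (frob_inner A X) + indicator_fun (stiefel d K) X"
    and A: "A \<in> carrier_mat d K" and Q: "Q \<in> carrier_mat d K"
    and L: "0\<^sub>m d K \<in> limiting_subdiff d K g Q"
  shows "A * Q\<^sup>T = Q * A\<^sup>T"
proof -
  obtain Xs Vs where XV: "\<forall>k. Xs k \<in> carrier_mat d K \<and> Vs k \<in> frechet_subdiff d K g (Xs k)"
    and lim_X: "(\<lambda>k. frob_norm (Xs k - Q)) \<longlonglongrightarrow> 0"
    and lim_V: "(\<lambda>k. frob_norm (Vs k - 0\<^sub>m d K)) \<longlonglongrightarrow> 0"
    using L unfolding limiting_subdiff_def by blast
  have Xc: "\<And>k. Xs k \<in> carrier_mat d K" and Vc: "\<And>k. Vs k \<in> carrier_mat d K"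
    using XV by (auto simp: frechet_subdiff_def)
  have "(\<Sum>l<K. A $$ (i,l) * Q $$ (j,l)) = (\<Sum>l<K. Q $$ (i,l) * A $$ (j,l))" if ij: "i < d" "j < d" for i j
  proof -
    have sym_k: "(Vs k - A) * (Xs k)\<^sup>T = Xs k * (Vs k - A)\<^sup>T" for k
      using frechet_subdiff_linear_stiefel[OF g A] XV by metis
    have eq: "(\<Sum>l<K. (Vs k $$ (i,l) - A $$ (i,l)) * Xs k $$ (j,l))
        = (\<Sum>l<K. Xs k $$ (i,l) * (Vs k $$ (j,l) - A $$ (j,l)))" for k
      using arg_cong[where f = "\<lambda>M. M $$ (i,j)", OF sym_k[of k]] Xc[of k] Vc[of k] A ij
      by (simp add: scalar_prod_def atLeast0LessThan)
    have lim_Xe: "(\<lambda>k. Xs k $$ (a,b)) \<longlonglongrightarrow> Q $$ (a,b)" if "a < d" "b < K" for a b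
      using tendsto_index_mat[OF Xc Q lim_X that] .
    have lim_Ve: "(\<lambda>k. Vs k $$ (a,b)) \<longlonglongrightarrow> 0" if "a < d" "b < K" for a b
      using tendsto_index_mat[OF Vc _ lim_V that] that by simp
    have "(\<lambda>k. \<Sum>l<K. (Vs k $$ (i,l) - A $$ (i,l)) * Xs k $$ (j,l))
        \<longlonglongrightarrow> (\<Sum>l<K. (0 - A $$ (i,l)) * Q $$ (j,l))"
      using ij by (intro tendsto_intros lim_Xe lim_Ve) auto
    moreover have "(\<lambda>k. \<Sum>l<K. (Vs k $$ (i,l) - A $$ (i,l)) * Xs k $$ (j,l))
        \<longlonglongrightarrow> (\<Sum>l<K. Q $$ (i,l) * (0 - A $$ (j,l)))"
      unfolding eq using ij by (intro tendsto_intros lim_Xe lim_Ve) auto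
    ultimately have "(\<Sum>l<K. (0 - A $$ (i,l)) * Q $$ (j,l)) = (\<Sum>l<K. Q $$ (i,l) * (0 - A $$ (j,l)))"
      by (rule LIMSEQ_unique)
    then show ?thesis by (simp add: sum_negf)
  qed
  then show ?thesis
    using A Q by (intro eq_matI) (auto simp: scalar_prod_def atLeast0LessThan)
qed

lemma stiefel_diff_gram:
  assumes Q: "Q \<in> stiefel d K" and Y: "Y \<in> stiefel d K" and ml: "m < K" "l < K"
  shows "(Q\<^sup>T * (Y - Q)) $$ (m,l) + (Q\<^sup>T * (Y - Q)) $$ (l,m) = - ((Y - Q)\<^sup>T * (Y - Q)) $$ (m,l)"
proof -
  have Qc: "Q \<in> carrier_mat d K" and Yc: "Y \<in> carrier_mat d K"
    using Q Y by (auto intro: stiefel_carrier)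
  have "(\<Sum>k<d. Q $$ (k,m) * (Y $$ (k,l) - Q $$ (k,l))) + (\<Sum>k<d. Q $$ (k,l) * (Y $$ (k,m) - Q $$ (k,m)))
      + (\<Sum>k<d. (Y $$ (k,m) - Q $$ (k,m)) * (Y $$ (k,l) - Q $$ (k,l)))
      = (\<Sum>k<d. Y $$ (k,m) * Y $$ (k,l) - Q $$ (k,m) * Q $$ (k,l))"
    unfolding sum.distrib[symmetric] by (rule sum.cong) (simp_all add: algebra_simps)
  also have "\<dots> = 0"
    using stiefel_col_inner[OF Y ml] stiefel_col_inner[OF Q ml] by (simp add: sum_subtractf)
  finally show ?thesis
    using Qc Yc ml by (simp add: scalar_prod_def atLeast0LessThan mult.commute)
qed

lemma frob_inner_stiefel_diff:
  assumes Q: "Q \<in> stiefel d K" and Y: "Y \<in> stiefel d K"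
    and S: "S \<in> carrier_mat K K" and S_sym: "S\<^sup>T = S"
  shows "2 * frob_inner (Q * S) (Y - Q) = - frob_inner S ((Y - Q)\<^sup>T * (Y - Q))"
proof -
  have Qc: "Q \<in> carrier_mat d K" and Yc: "Y \<in> carrier_mat d K"
    using Q Y by (auto intro: stiefel_carrier)
  define G where "G = Q\<^sup>T * (Y - Q)"
  have inner: "frob_inner (Q * S) (Y - Q) = (\<Sum>m<K. \<Sum>l<K. S $$ (m,l) * G $$ (m,l))"
    unfolding G_def frob_inner_mult_left[OF Qc S minus_carrier_mat[OF Qc]] frob_inner_carrier[OF S] ..
  have "(\<Sum>m<K. \<Sum>l<K. S $$ (m,l) * G $$ (m,l)) = (\<Sum>l<K. \<Sum>m<K. S $$ (m,l) * G $$ (m,l))"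
    by (rule sum.swap)
  also have "\<dots> = (\<Sum>m<K. \<Sum>l<K. S $$ (m,l) * G $$ (l,m))"
    using S S_sym by (intro sum.cong refl) (metis index_transpose_mat(1) carrier_matD lessThan_iff)
  finally have "2 * frob_inner (Q * S) (Y - Q) = (\<Sum>m<K. \<Sum>l<K. S $$ (m,l) * (G $$ (m,l) + G $$ (l,m)))"
    using inner by (simp add: distrib_left sum.distrib)
  also have "\<dots> = (\<Sum>m<K. \<Sum>l<K. - (S $$ (m,l) * ((Y - Q)\<^sup>T * (Y - Q)) $$ (m,l)))"
    unfolding G_def by (intro sum.cong refl) (simp add: stiefel_diff_gram[OF Q Y])
  also have "\<dots> = - frob_inner S ((Y - Q)\<^sup>T * (Y - Q))"
    by (simp add: frob_inner_carrier[OF S] sum_negf)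
  finally show ?thesis .
qed

lemma stationary_quadratic_growth:
  assumes Q: "Q \<in> stiefel d K" and A: "A \<in> carrier_mat d K" and sym: "A * Q\<^sup>T = Q * A\<^sup>T"
  shows "\<exists>c\<ge>0. \<forall>Y\<in>stiefel d K. frob_inner A Q - c * frob_inner (Y - Q) (Y - Q) \<le> frob_inner A Y"
proof -
  have Qc: "Q \<in> carrier_mat d K" and QtQ: "Q\<^sup>T * Q = 1\<^sub>m K" using Q by (auto simp: stiefel_def)
  define S where "S = A\<^sup>T * Q"
  have S: "S \<in> carrier_mat K K" using A Qc by (simp add: S_def)
  have A_eq: "A = Q * S"
  proof -
    have "A = A * (Q\<^sup>T * Q)" using A QtQ by simp
    also have "\<dots> = (A * Q\<^sup>T) * Q" using A Qc by simp
    also have "\<dots> = (Q * A\<^sup>T) * Q" by (simp only: sym)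
    also have "\<dots> = Q * S" using A Qc by (simp add: S_def)
    finally show ?thesis .
  qed
  have S_sym: "S\<^sup>T = S"
  proof -
    have "S\<^sup>T = Q\<^sup>T * A" using A Qc by (simp add: S_def transpose_mult)
    also have "\<dots> = (Q\<^sup>T * Q) * S" using Qc S A_eq by simp
    also have "\<dots> = S" using QtQ S by simp
    finally show ?thesis .
  qed
  define c where "c = (\<Sum>m<K. \<Sum>l<K. \<bar>S $$ (m,l)\<bar>) / 2"
  have "frob_inner A Q - c * frob_inner (Y - Q) (Y - Q) \<le> frob_inner A Y" if Y: "Y \<in> stiefel d K" for Y
  proof -
    have Yc: "Y \<in> carrier_mat d K" using Y by (rule stiefel_carrier)
    have "\<bar>frob_inner S ((Y - Q)\<^sup>T * (Y - Q))\<bar> \<le> 2 * c * frob_inner (Y - Q) (Y - Q)"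
      using abs_frob_inner_le[OF S abs_gram_index_le[OF minus_carrier_mat[OF Qc]]] by (simp add: c_def)
    then have "- c * frob_inner (Y - Q) (Y - Q) \<le> frob_inner A (Y - Q)"
      using frob_inner_stiefel_diff[OF Q Y S S_sym] A_eq by simp
    then show ?thesis using frob_inner_diff_right[OF A Qc Yc] by simp
  qed
  moreover have "c \<ge> 0" by (simp add: c_def sum_nonneg)
  ultimately show ?thesis by blast
qed

lemma zero_frechet_subdiff_of_quadratic_minorant:
  assumes X: "X \<in> carrier_mat m n" and fin: "\<bar>f X\<bar> \<noteq> \<infinity>" and c: "c \<ge> 0"
    and minorant: "\<And>Y. Y \<in> carrier_mat m n \<Longrightarrow>
      ereal (real_of_ereal (f X) - c * frob_inner (Y - X) (Y - X)) \<le> f Y"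
  shows "0\<^sub>m m n \<in> frechet_subdiff m n f X"
proof -
  have "\<exists>\<delta>>0. \<forall>Y \<in> carrier_mat m n. frob_norm (Y - X) < \<delta> \<longrightarrow>
      ereal (real_of_ereal (f X) + frob_inner (0\<^sub>m m n) (Y - X) - \<epsilon> * frob_norm (Y - X)) \<le> f Y"
    if \<epsilon>: "\<epsilon> > 0" for \<epsilon>
  proof (intro exI[of _ "\<epsilon> / (c + 1)"] conjI ballI impI)
    show "\<epsilon> / (c + 1) > 0" using \<epsilon> c by simp
    fix Y assume Y: "Y \<in> carrier_mat m n" and near: "frob_norm (Y - X) < \<epsilon> / (c + 1)"
    have sq: "frob_inner (Y - X) (Y - X) = frob_norm (Y - X) * frob_norm (Y - X)"
      by (simp add: frob_norm_def frob_inner_self_nonneg)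
    have "(c + 1) * frob_norm (Y - X) < \<epsilon>"
      using near c by (simp add: pos_less_divide_eq mult.commute)
    moreover have "c * frob_norm (Y - X) \<le> (c + 1) * frob_norm (Y - X)"
      using frob_norm_nonneg[of "Y - X"] by (intro mult_right_mono) auto
    ultimately have "c * frob_norm (Y - X) \<le> \<epsilon>" by linarith
    then have "c * frob_inner (Y - X) (Y - X) \<le> \<epsilon> * frob_norm (Y - X)"
      unfolding sq using frob_norm_nonneg[of "Y - X"] by (metis mult.assoc mult_right_mono)
    then have "ereal (real_of_ereal (f X) + frob_inner (0\<^sub>m m n) (Y - X) - \<epsilon> * frob_norm (Y - X))
        \<le> ereal (real_of_ereal (f X) - c * frob_inner (Y - X) (Y - X))"
      by (simp add: frob_inner_def)
    then show "ereal (real_of_ereal (f X) + frob_inner (0\<^sub>m m n) (Y - X) - \<epsilon> * frob_norm (Y - X)) \<le> f Y"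
      using minorant[OF Y] by (rule order_trans)
  qed
  then show ?thesis using X fin by (simp add: frechet_subdiff_def)
qed

lemma frechet_subdiff_subset_limiting:
  assumes "V \<in> frechet_subdiff m n f X"
  shows "V \<in> limiting_subdiff m n f X"
proof -
  have "X \<in> carrier_mat m n" "V \<in> carrier_mat m n" "\<bar>f X\<bar> \<noteq> \<infinity>"
    using assms by (auto simp: frechet_subdiff_def)
  moreover have "\<exists>Xs Vs. (\<forall>k. Xs k \<in> carrier_mat m n \<and> Vs k \<in> frechet_subdiff m n f (Xs k)) \<and>
      (\<lambda>k. frob_norm (Xs k - X)) \<longlonglongrightarrow> 0 \<and> (\<lambda>k. f (Xs k)) \<longlonglongrightarrow> f X \<and>
      (\<lambda>k. frob_norm (Vs k - V)) \<longlonglongrightarrow> 0"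
    by (rule exI[of _ "\<lambda>k. X"], rule exI[of _ "\<lambda>k. V"])
      (use assms \<open>X \<in> carrier_mat m n\<close> in \<open>simp add: frob_norm_def frob_inner_def\<close>)
  ultimately show ?thesis unfolding limiting_subdiff_def by blast
qed

theorem limiting_stationary_linear_stiefel_iff:
  assumes g: "\<And>X. g X = ereal (frob_inner A X) + indicator_fun (stiefel d K) X"
    and A: "A \<in> carrier_mat d K" and Q: "Q \<in> stiefel d K"
  shows "0\<^sub>m d K \<in> limiting_subdiff d K g Q \<longleftrightarrow> A * Q\<^sup>T = Q * A\<^sup>T"
proof
  assume "0\<^sub>m d K \<in> limiting_subdiff d K g Q"
  then show "A * Q\<^sup>T = Q * A\<^sup>T"
    using limiting_stationary_imp_symmetric[OF g A stiefel_carrier[OF Q]] by blast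
next
  assume "A * Q\<^sup>T = Q * A\<^sup>T"
  then obtain c where c: "c \<ge> 0"
    and growth: "\<forall>Y\<in>stiefel d K. frob_inner A Q - c * frob_inner (Y - Q) (Y - Q) \<le> frob_inner A Y"
    using stationary_quadratic_growth[OF Q A] by blast
  have "ereal (real_of_ereal (g Q) - c * frob_inner (Y - Q) (Y - Q)) \<le> g Y" for Y
    using growth Q by (cases "Y \<in> stiefel d K") (auto simp: g indicator_fun_def)
  then have "0\<^sub>m d K \<in> frechet_subdiff d K g Q"
    using zero_frechet_subdiff_of_quadratic_minorant[OF stiefel_carrier[OF Q] _ c] Q
    by (simp add: g indicator_fun_def)
  then show "0\<^sub>m d K \<in> limiting_subdiff d K g Q" by (rule frechet_subdiff_subset_limiting)
qed

section \<open>Symmetric orthogonal matrices\<close>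

lemma exists_orthogonal_nonzero:
  fixes u :: "nat \<Rightarrow> nat \<Rightarrow> real"
  assumes k: "k < n"
    and orth: "\<And>m m'. m < k \<Longrightarrow> m' < k \<Longrightarrow> (\<Sum>i<n. u m i * u m' i) = (if m = m' then 1 else 0)"
  shows "\<exists>y. (\<forall>m<k. (\<Sum>i<n. u m i * y i) = 0) \<and> (\<exists>i<n. y i \<noteq> 0)"
proof -
  text \<open>Project the unit vectors onto the orthogonal complement of the \<open>u m\<close>; if all
    projections vanished, taking traces would give \<open>n = k\<close>.\<close>
  define x where "x j i = (if i = j then 1 else 0) - (\<Sum>m<k. u m j * u m i)" for j i
  have x_orth: "(\<Sum>i<n. u m' i * x j i) = 0" if m': "m' < k" and j: "j < n" for m' j
  proof -
    have "(\<Sum>i<n. u m' i * x j i) = (\<Sum>i<n. u m' i * (if i = j then 1 else 0))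
        - (\<Sum>i<n. \<Sum>m<k. u m j * (u m' i * u m i))"
      by (simp add: x_def right_diff_distrib sum_subtractf sum_distrib_left mult_ac)
    also have "(\<Sum>i<n. u m' i * (if i = j then 1 else 0)) = u m' j"
      using j by (simp add: if_distrib cong: if_cong)
    also have "(\<Sum>i<n. \<Sum>m<k. u m j * (u m' i * u m i)) = (\<Sum>m<k. u m j * (\<Sum>i<n. u m' i * u m i))"
      by (subst sum.swap) (simp add: sum_distrib_left)
    also have "\<dots> = (\<Sum>m<k. u m j * (if m' = m then 1 else 0))"
      using m' by (intro sum.cong) (auto simp: orth)
    also have "\<dots> = u m' j" using m' by (simp add: if_distrib cong: if_cong)
    finally show ?thesis by simp
  qed
  have "\<exists>j<n. \<exists>i<n. x j i \<noteq> 0"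
  proof (rule ccontr)
    assume "\<not> ?thesis"
    then have diag: "(\<Sum>m<k. u m j * u m j) = 1" if "j < n" for j
      using that by (force simp: x_def)
    have "real n = (\<Sum>j<n. \<Sum>m<k. u m j * u m j)"
      by (simp add: diag)
    also have "\<dots> = real k"
      by (subst sum.swap) (simp add: orth)
    finally show False using k by simp
  qed
  then show ?thesis using x_orth by blast
qed

lemma symmetric_apply_orthogonal:
  fixes B :: "real mat" and u :: "nat \<Rightarrow> real"
  assumes sym: "\<And>i j. i < n \<Longrightarrow> j < n \<Longrightarrow> B $$ (i,j) = B $$ (j,i)"
    and eig: "\<And>i. i < n \<Longrightarrow> (\<Sum>j<n. B $$ (i,j) * u j) = \<mu> * u i"
    and orth: "(\<Sum>i<n. u i * y i) = 0"
  shows "(\<Sum>i<n. u i * (\<Sum>j<n. B $$ (i,j) * y j)) = 0"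
proof -
  have "(\<Sum>i<n. u i * (\<Sum>j<n. B $$ (i,j) * y j)) = (\<Sum>j<n. y j * (\<Sum>i<n. B $$ (j,i) * u i))"
    unfolding sum_distrib_left by (subst sum.swap) (intro sum.cong refl, simp add: sym mult_ac)
  also have "\<dots> = (\<Sum>j<n. y j * (\<mu> * u j))" by (intro sum.cong refl) (simp add: eig)
  also have "\<dots> = \<mu> * (\<Sum>j<n. u j * y j)" by (simp add: sum_distrib_left mult_ac)
  finally show ?thesis using orth by simp
qed

lemma involution_apply_twice:
  fixes B :: "real mat"
  assumes inv: "\<And>i j. i < n \<Longrightarrow> j < n \<Longrightarrow> (\<Sum>k<n. B $$ (i,k) * B $$ (k,j)) = (if i = j then 1 else 0)"
    and i: "i < n"
  shows "(\<Sum>j<n. B $$ (i,j) * (\<Sum>l<n. B $$ (j,l) * y l)) = y i"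
proof -
  have "(\<Sum>j<n. B $$ (i,j) * (\<Sum>l<n. B $$ (j,l) * y l)) = (\<Sum>l<n. (\<Sum>j<n. B $$ (i,j) * B $$ (j,l)) * y l)"
    unfolding sum_distrib_left sum_distrib_right by (subst sum.swap) (simp add: mult_ac)
  also have "\<dots> = (\<Sum>l<n. if l = i then y l else 0)"
    using i by (intro sum.cong refl) (simp add: inv)
  finally show ?thesis using i by simp
qed

lemma normalized_eigenvector:
  fixes B :: "real mat" and u :: "nat \<Rightarrow> nat \<Rightarrow> real"
  assumes eig: "\<And>i. i < n \<Longrightarrow> (\<Sum>j<n. B $$ (i,j) * w j) = \<sigma> * w i"
    and orth: "\<And>m. m < k \<Longrightarrow> (\<Sum>i<n. u m i * w i) = 0" and nz: "i1 < n" "w i1 \<noteq> 0"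
  shows "\<exists>v. (\<Sum>i<n. v i * v i) = 1 \<and> (\<forall>m<k. (\<Sum>i<n. u m i * v i) = 0)
    \<and> (\<forall>i<n. (\<Sum>j<n. B $$ (i,j) * v j) = \<sigma> * v i)"
proof (intro exI conjI allI impI)
  define N where "N = (\<Sum>i<n. w i * w i)"
  have "0 < w i1 * w i1" using nz not_real_square_gt_zero by blast
  also have "\<dots> \<le> N" unfolding N_def by (rule member_le_sum) (use nz in auto)
  finally have N: "N > 0" .
  show "(\<Sum>i<n. w i / sqrt N * (w i / sqrt N)) = 1"
    using N by (simp add: N_def sum_divide_distrib[symmetric])
  show "(\<Sum>i<n. u m i * (w i / sqrt N)) = 0" if "m < k" for m
    using orth[OF that] by (simp add: sum_divide_distrib[symmetric])
  show "(\<Sum>j<n. B $$ (i,j) * (w j / sqrt N)) = \<sigma> * (w i / sqrt N)" if "i < n" for i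
    using eig[OF that] by (simp add: sum_divide_distrib[symmetric])
qed

lemma symmetric_involution_orthogonal_eigenvector:
  fixes B :: "real mat" and u :: "nat \<Rightarrow> nat \<Rightarrow> real"
  assumes sym: "\<And>i j. i < n \<Longrightarrow> j < n \<Longrightarrow> B $$ (i,j) = B $$ (j,i)"
    and inv: "\<And>i j. i < n \<Longrightarrow> j < n \<Longrightarrow> (\<Sum>k<n. B $$ (i,k) * B $$ (k,j)) = (if i = j then 1 else 0)"
    and eig: "\<And>m i. m < k \<Longrightarrow> i < n \<Longrightarrow> (\<Sum>j<n. B $$ (i,j) * u m j) = q m * u m i"
    and y_orth: "\<And>m. m < k \<Longrightarrow> (\<Sum>i<n. u m i * y i) = 0" and y_nz: "i0 < n" "y i0 \<noteq> 0"
  shows "\<exists>v \<sigma>. (\<sigma> = 1 \<or> \<sigma> = -1) \<and> (\<Sum>i<n. v i * v i) = 1 \<and> (\<forall>m<k. (\<Sum>i<n. u m i * v i) = 0)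
    \<and> (\<forall>i<n. (\<Sum>j<n. B $$ (i,j) * v j) = \<sigma> * v i)"
proof -
  define By where "By i = (\<Sum>j<n. B $$ (i,j) * y j)" for i
  text \<open>\<open>y \<pm> B y\<close> are eigenvectors for \<open>\<pm>1\<close>, and they cannot both vanish.\<close>
  obtain \<sigma> :: real and i1 where \<sigma>: "\<sigma> = 1 \<or> \<sigma> = -1" and nz: "i1 < n" "y i1 + \<sigma> * By i1 \<noteq> 0"
  proof (cases "\<exists>i<n. y i + By i \<noteq> 0")
    case False
    then have "y i0 + (-1) * By i0 \<noteq> 0" using y_nz by auto
    then show ?thesis using that[of "-1"] y_nz by blast
  qed (use that[of 1] in auto)
  have "(\<Sum>j<n. B $$ (i,j) * (y j + \<sigma> * By j)) = \<sigma> * (y i + \<sigma> * By i)" if i: "i < n" for i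
  proof -
    have "(\<Sum>j<n. B $$ (i,j) * (y j + \<sigma> * By j)) = (\<Sum>j<n. B $$ (i,j) * y j) + \<sigma> * (\<Sum>j<n. B $$ (i,j) * By j)"
      by (simp add: distrib_left sum.distrib sum_distrib_left mult.left_commute)
    also have "\<dots> = By i + \<sigma> * y i"
      using involution_apply_twice[OF inv i, of y, folded By_def] by (simp add: By_def[symmetric])
    finally show ?thesis using \<sigma> by (auto simp: algebra_simps)
  qed
  moreover have "(\<Sum>i<n. u m i * (y i + \<sigma> * By i)) = 0" if m: "m < k" for m
  proof -
    have "(\<Sum>i<n. u m i * (y i + \<sigma> * By i)) = (\<Sum>i<n. u m i * y i) + \<sigma> * (\<Sum>i<n. u m i * By i)"
      by (simp add: distrib_left sum.distrib sum_distrib_left mult.left_commute)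
    then show ?thesis
      using y_orth[OF m] symmetric_apply_orthogonal[OF sym eig[OF m] y_orth[OF m]] by (simp add: By_def)
  qed
  ultimately show ?thesis
    using normalized_eigenvector[of n B "\<lambda>i. y i + \<sigma> * By i" \<sigma> k u i1] nz \<sigma> by blast
qed

lemma symmetric_involution_eigenbasis:
  fixes B :: "real mat"
  assumes sym: "\<And>i j. i < n \<Longrightarrow> j < n \<Longrightarrow> B $$ (i,j) = B $$ (j,i)"
    and inv: "\<And>i j. i < n \<Longrightarrow> j < n \<Longrightarrow> (\<Sum>k<n. B $$ (i,k) * B $$ (k,j)) = (if i = j then 1 else 0)"
    and "k \<le> n"
  shows "\<exists>u q. (\<forall>m<k. \<forall>m'<k. (\<Sum>i<n. u m i * u m' i) = (if m = m' then 1 else 0))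
    \<and> (\<forall>m<k. q m = 1 \<or> q m = (-1 :: real))
    \<and> (\<forall>m<k. \<forall>i<n. (\<Sum>j<n. B $$ (i,j) * u m j) = q m * u m i)"
  using \<open>k \<le> n\<close>
proof (induction k)
  case (Suc k)
  then obtain u q where
    orth: "\<forall>m<k. \<forall>m'<k. (\<Sum>i<n. u m i * u m' i) = (if m = m' then 1 else (0 :: real))"
    and pm: "\<forall>m<k. q m = 1 \<or> q m = (-1 :: real)"
    and eig: "\<forall>m<k. \<forall>i<n. (\<Sum>j<n. B $$ (i,j) * u m j) = q m * u m i"
    by auto
  obtain y i0 where "\<forall>m<k. (\<Sum>i<n. u m i * y i) = 0" "i0 < n" "y i0 \<noteq> 0"
    using exists_orthogonal_nonzero[of k n u] Suc.prems orth by auto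
  then obtain v \<sigma> where \<sigma>: "\<sigma> = 1 \<or> \<sigma> = -1" and v_norm: "(\<Sum>i<n. v i * v i) = 1"
    and v_orth: "\<forall>m<k. (\<Sum>i<n. u m i * v i) = 0" and v_eig: "\<forall>i<n. (\<Sum>j<n. B $$ (i,j) * v j) = \<sigma> * v i"
    using symmetric_involution_orthogonal_eigenvector[OF sym inv, of k u q y i0] eig by auto
  have "\<forall>m<Suc k. \<forall>m'<Suc k. (\<Sum>i<n. (u(k := v)) m i * (u(k := v)) m' i) = (if m = m' then 1 else 0)"
    using orth v_orth v_norm by (auto simp: less_Suc_eq mult.commute)
  moreover have "\<forall>m<Suc k. (q(k := \<sigma>)) m = 1 \<or> (q(k := \<sigma>)) m = -1"
    using pm \<sigma> by (auto simp: less_Suc_eq)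
  moreover have "\<forall>m<Suc k. \<forall>i<n. (\<Sum>j<n. B $$ (i,j) * (u(k := v)) m j) = (q(k := \<sigma>)) m * (u(k := v)) m i"
    using eig v_eig by (auto simp: less_Suc_eq)
  ultimately show ?case by blast
qed simp

theorem symmetric_orthogonal_spectral:
  assumes B: "B \<in> stiefel n n" and B_sym: "B\<^sup>T = B"
  shows "\<exists>U q. U \<in> stiefel n n \<and> (\<forall>i<n. q i = 1 \<or> q i = -1) \<and> B = U * diagm n q * U\<^sup>T"
proof -
  have Bc: "B \<in> carrier_mat n n" using B by (rule stiefel_carrier)
  have sym: "B $$ (i,j) = B $$ (j,i)" if "i < n" "j < n" for i j
    using B_sym Bc that by (metis carrier_matD index_transpose_mat(1))
  have BB: "B * B = 1\<^sub>m n" using B B_sym by (simp add: stiefel_def)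
  have inv: "(\<Sum>k<n. B $$ (i,k) * B $$ (k,j)) = (if i = j then 1 else 0)" if "i < n" "j < n" for i j
    using arg_cong[where f = "\<lambda>M. M $$ (i,j)", OF BB] index_mult_mat_sum[OF Bc Bc that] that by simp
  obtain u q where
    orth: "\<forall>m<n. \<forall>m'<n. (\<Sum>i<n. u m i * u m' i) = (if m = m' then 1 else (0 :: real))"
    and pm: "\<forall>m<n. q m = 1 \<or> q m = (-1 :: real)"
    and eig: "\<forall>m<n. \<forall>i<n. (\<Sum>j<n. B $$ (i,j) * u m j) = q m * u m i"
    using symmetric_involution_eigenbasis[OF sym inv, of n] by auto
  define U where "U = mat n n (\<lambda>(i,m). u m i)"
  have Uc: "U \<in> carrier_mat n n" by (simp add: U_def)
  have U: "U \<in> stiefel n n"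
    by (rule stiefelI_col_inner[OF Uc]) (simp add: U_def orth)
  have BU: "B * U = U * diagm n q"
  proof (rule eq_matI)
    fix i j assume "i < dim_row (U * diagm n q)" "j < dim_col (U * diagm n q)"
    then have ij: "i < n" "j < n" using Uc by auto
    have "(B * U) $$ (i,j) = (\<Sum>k<n. B $$ (i,k) * u j k)"
      using index_mult_mat_sum[OF Bc Uc ij] ij by (simp add: U_def)
    also have "\<dots> = (U * diagm n q) $$ (i,j)"
      using eig ij index_mult_diagm[OF Uc ij] by (simp add: U_def)
    finally show "(B * U) $$ (i,j) = (U * diagm n q) $$ (i,j)" .
  qed (use Bc Uc in auto)
  have "B = B * (U * U\<^sup>T)" using stiefel_square_mult_transpose[OF U] Bc by simp
  also have "\<dots> = U * diagm n q * U\<^sup>T" using BU Bc Uc by (simp flip: assoc_mult_mat[of _ n n _ n _ n])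
  finally show ?thesis using U pm by blast
qed

lemma orthogonal_commute_transpose:
  assumes B: "B \<in> stiefel n n" and D: "D \<in> carrier_mat n n" and comm: "D * B\<^sup>T = B * D"
  shows "B\<^sup>T * D = D * B"
proof -
  have Bc: "B \<in> carrier_mat n n" and Btc: "B\<^sup>T \<in> carrier_mat n n" and BtB: "B\<^sup>T * B = 1\<^sub>m n"
    using B by (auto simp: stiefel_def)
  have "B\<^sup>T * D = (B\<^sup>T * (D * B\<^sup>T)) * B"
    using assoc_mult_mat[OF Btc mult_carrier_mat[OF D Btc] Bc] assoc_mult_mat[OF D Btc Bc] BtB D by simp
  also have "\<dots> = (B\<^sup>T * (B * D)) * B" by (simp only: comm)
  also have "\<dots> = D * B"
    using assoc_mult_mat[OF Btc mult_carrier_mat[OF Bc D] Bc] assoc_mult_mat[OF Btc Bc D, symmetric] BtB D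
    by simp
  finally show ?thesis .
qed

lemma orthogonal_conj_sign_diagm:
  assumes U: "U \<in> stiefel n n" and q: "\<forall>i<n. q i = 1 \<or> q i = -1"
  shows "U * diagm n q * U\<^sup>T \<in> stiefel n n \<and> (U * diagm n q * U\<^sup>T)\<^sup>T = U * diagm n q * U\<^sup>T"
proof -
  define Q V where "Q = diagm n q" and "V = U\<^sup>T"
  have Uc: "U \<in> carrier_mat n n" and Vc: "V \<in> carrier_mat n n" and Qc: "Q \<in> carrier_mat n n"
    and VU: "V * U = 1\<^sub>m n" and VT: "V\<^sup>T = U" and QT: "Q\<^sup>T = Q"
    using U by (auto simp: stiefel_def Q_def V_def)
  have UV: "U * V = 1\<^sub>m n" unfolding V_def by (rule stiefel_square_mult_transpose[OF U])
  have QQ: "Q * Q = 1\<^sub>m n"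
    unfolding Q_def diagm_mult_diagm using q by (auto simp: diagm_def intro!: eq_matI)
  have cancel: "V * (U * X) = X" "Q * (Q * X) = X" if "X \<in> carrier_mat n m" for X m
    using that Uc Vc Qc VU QQ by (simp_all flip: assoc_mult_mat[OF Vc Uc that] assoc_mult_mat[OF Qc Qc that])
  have sym: "(U * Q * V)\<^sup>T = U * Q * V"
    using transpose_mult[OF mult_carrier_mat[OF Uc Qc] Vc] transpose_mult[OF Uc Qc] Uc Vc Qc VT QT
    by (simp add: V_def[symmetric])
  have UQc: "U * Q \<in> carrier_mat n n" and QVc: "Q * V \<in> carrier_mat n n" using Uc Qc Vc by auto
  have "(U * Q * V)\<^sup>T * (U * Q * V) = U * Q * (V * (U * Q * V))"
    unfolding sym using UQc Vc by (simp add: assoc_mult_mat[OF UQc Vc mult_carrier_mat[OF UQc Vc]])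
  also have "V * (U * Q * V) = Q * V"
    using assoc_mult_mat[OF Uc Qc Vc] cancel(1)[OF QVc] by simp
  also have "U * Q * (Q * V) = U * V"
    using assoc_mult_mat[OF Uc Qc QVc] cancel(2)[OF Vc] by simp
  finally have "(U * Q * V)\<^sup>T * (U * Q * V) = U * V" .
  then show ?thesis using sym UV mult_carrier_mat[OF UQc Vc] by (simp add: stiefel_def Q_def V_def)
qed

section \<open>Orthogonal matrices that symmetrize block-constant weights\<close>

locale weight_blocks =
  fixes r p :: nat and a :: "nat \<Rightarrow> real" and s :: "nat \<Rightarrow> nat"
  assumes a_mono: "\<And>i. i + 1 < r \<Longrightarrow> a i \<ge> a (i + 1)"
    and a_last_pos: "a (r - 1) > 0"
    and s0: "s 0 = 0" and sp: "s p = r"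
    and s_mono: "\<And>i. i < p \<Longrightarrow> s i < s (i + 1)"
    and a_const: "\<And>i j. 1 \<le> i \<Longrightarrow> i \<le> p \<Longrightarrow> s (i - 1) \<le> j \<Longrightarrow> j < s i \<Longrightarrow> a j = a (s i - 1)"
    and a_strict: "\<And>i. 1 \<le> i \<Longrightarrow> i < p \<Longrightarrow> a (s i - 1) > a (s (i + 1) - 1)"
begin

lemma weights_pos: "i < r \<Longrightarrow> a i > 0"
proof -
  assume "i < r"
  then have "i \<le> r - 1" by simp
  then have "a i \<ge> a (r - 1)"
  proof (induction rule: inc_induct)
    case (step i)
    then show ?case using a_mono[of i] by fastforce
  qed simp
  then show ?thesis using a_last_pos by simp
qed

lemma s_strict_mono: "b < b' \<Longrightarrow> b' \<le> p \<Longrightarrow> s b < s b'"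
proof (induction b' rule: less_induct)
  case (less b')
  then obtain c where c: "b' = Suc c" by (cases b') auto
  then have "s c < s b'" using s_mono[of c] less.prems by simp
  moreover have "s b \<le> s c" using less.IH[of c] less.prems c by (cases "b = c") auto
  ultimately show ?case by simp
qed

lemma s_mono_le: "b \<le> b' \<Longrightarrow> b' \<le> p \<Longrightarrow> s b \<le> s b'"
  using s_strict_mono[of b b'] by (cases "b = b'") auto

definition block_of :: "nat \<Rightarrow> nat" where
  "block_of i = (THE b. b < p \<and> s b \<le> i \<and> i < s (Suc b))"

lemma block_of_unique:
  assumes "b < p" "s b \<le> i" "i < s (Suc b)" "b' < p" "s b' \<le> i" "i < s (Suc b')"
  shows "b = b'"
  using s_mono_le[of "Suc b" b'] s_mono_le[of "Suc b'" b] assms by (cases b b' rule: linorder_cases) auto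

lemma block_of_eqI: "b < p \<Longrightarrow> s b \<le> i \<Longrightarrow> i < s (Suc b) \<Longrightarrow> block_of i = b"
  unfolding block_of_def by (rule the_equality) (auto dest: block_of_unique)

lemma block_of_bounds:
  assumes "i < r"
  shows "block_of i < p" "s (block_of i) \<le> i" "i < s (Suc (block_of i))"
proof -
  have ex: "\<exists>b. i < s (Suc b) \<and> b < p"
    using assms sp s0 by (intro exI[of _ "p - 1"]) (cases p; auto)
  define b where "b = (LEAST b. i < s (Suc b) \<and> b < p)"
  have b: "i < s (Suc b)" "b < p" unfolding b_def using LeastI_ex[OF ex] by auto
  have "s b \<le> i"
  proof (cases b)
    case (Suc c)
    then show ?thesis using not_less_Least[of c "\<lambda>b. i < s (Suc b) \<and> b < p"] b
      unfolding b_def by auto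
  qed (simp add: s0)
  then show "block_of i < p" "s (block_of i) \<le> i" "i < s (Suc (block_of i))" using block_of_eqI b by auto
qed

lemma a_eq_iff_block_of:
  assumes "i < r" "j < r"
  shows "a i = a j \<longleftrightarrow> block_of i = block_of j"
proof -
  define \<alpha> where "\<alpha> b = a (s (Suc b) - 1)" for b
  have a_block_of: "a k = \<alpha> (block_of k)" if "k < r" for k
    using a_const[of "Suc (block_of k)" k] block_of_bounds[OF that] by (simp add: \<alpha>_def)
  have "\<alpha> c > \<alpha> c'" if "c < c'" "c' < p" for c c'
    using that
  proof (induction c' rule: less_induct)
    case (less c')
    then obtain e where e: "c' = Suc e" by (cases c') auto
    then have "\<alpha> e > \<alpha> c'" using a_strict[of "Suc e"] less.prems by (simp add: \<alpha>_def)
    moreover have "\<alpha> c \<ge> \<alpha> e" using less.IH[of e] less.prems e by (cases "c = e") auto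
    ultimately show ?case by simp
  qed
  then have "\<alpha> c = \<alpha> c' \<longleftrightarrow> c = c'" if "c < p" "c' < p" for c c'
    using that by (metis less_irrefl linorder_neqE_nat)
  then show ?thesis using a_block_of assms block_of_bounds assms by simp
qed

definition block_size :: "nat \<Rightarrow> nat" where
  "block_size b = s (Suc b) - s b"

definition diag_block :: "real mat \<Rightarrow> nat \<Rightarrow> real mat" where
  "diag_block M b = mat (block_size b) (block_size b) (\<lambda>(i,j). M $$ (s b + i, s b + j))"

lemma sum_block_sizes: "b \<le> p \<Longrightarrow> sum_list (map block_size [0..<b]) = s b"
  by (induction b) (auto simp: block_size_def s0 s_mono_le)

lemma in_block: "b < p \<Longrightarrow> i < block_size b \<Longrightarrow> s b + i < r \<and> block_of (s b + i) = b"
  using s_mono_le[of "Suc b" p] sp block_of_eqI[of b "s b + i"] by (simp add: block_size_def)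

lemma blkdiag_blocks_carrier:
  assumes "\<And>b. b < p \<Longrightarrow> F b \<in> carrier_mat (block_size b) (block_size b)"
  shows "blkdiag (map F [0..<p]) \<in> carrier_mat r r"
  using blkdiag_carrier[of "[0..<p]" F block_size] assms sum_block_sizes[of p] sp by simp

lemma index_blkdiag_blocks:
  assumes F: "\<And>b. b < p \<Longrightarrow> F b \<in> carrier_mat (block_size b) (block_size b)" and ij: "i < r" "j < r"
  shows "blkdiag (map F [0..<p]) $$ (i,j)
    = (if block_of i = block_of j then F (block_of i) $$ (i - s (block_of i), j - s (block_of i)) else 0)"
proof -
  let ?Ms = "map F [0..<p]"
  have off: "sum_list (map dim_row (take b ?Ms)) = s b" if "b < p" for b
  proof -
    have "map dim_row (take b ?Ms) = map block_size [0..<b]"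
      using that by (auto simp: take_map intro!: carrier_matD(1)[OF F])
    then show ?thesis using sum_block_sizes[of b] that by simp
  qed
  have bi: "block_of i < p" "s (block_of i) \<le> i" "i - s (block_of i) < block_size (block_of i)"
    and bj: "block_of j < p" "s (block_of j) \<le> j" "j - s (block_of j) < block_size (block_of j)"
    using block_of_bounds[OF ij(1)] block_of_bounds[OF ij(2)] by (auto simp: block_size_def)
  have sq: "\<And>M. M \<in> set ?Ms \<Longrightarrow> dim_col M = dim_row M" using F by force
  have "blkdiag ?Ms $$ (s (block_of i) + (i - s (block_of i)), s (block_of j) + (j - s (block_of j)))
      = (if block_of i = block_of j then F (block_of i) $$ (i - s (block_of i), j - s (block_of j)) else 0)"
    using index_blkdiag[of ?Ms "block_of i" "block_of j" "i - s (block_of i)" "j - s (block_of j)", OF sq]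
      F[OF bi(1)] F[OF bj(1)]
      bi bj off[OF bi(1)] off[OF bj(1)] by simp
  then show ?thesis using bi bj by auto
qed

lemma blkdiag_blocks_inject:
  assumes F: "\<And>b. b < p \<Longrightarrow> F b \<in> carrier_mat (block_size b) (block_size b)"
    and G: "\<And>b. b < p \<Longrightarrow> G b \<in> carrier_mat (block_size b) (block_size b)"
    and eq: "blkdiag (map F [0..<p]) = blkdiag (map G [0..<p])" and b: "b < p"
  shows "F b = G b"
proof (rule eq_matI)
  fix i j assume "i < dim_row (G b)" "j < dim_col (G b)"
  then have ij: "i < block_size b" "j < block_size b" using G[OF b] by auto
  show "F b $$ (i,j) = G b $$ (i,j)"
    using index_blkdiag_blocks[OF F, of "s b + i" "s b + j"] index_blkdiag_blocks[OF G, of "s b + i" "s b + j"]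
      in_block[OF b ij(1)] in_block[OF b ij(2)] eq by simp
qed (use F[OF b] G[OF b] in auto)

lemma blkdiag_diagm_blocks:
  assumes "\<And>b i. b < p \<Longrightarrow> i < block_size b \<Longrightarrow> qf b i = q (s b + i)"
  shows "blkdiag (map (\<lambda>b. diagm (block_size b) (qf b)) [0..<p]) = diagm r q"
proof (rule eq_matI)
  fix i j assume "i < dim_row (diagm r q)" "j < dim_col (diagm r q)"
  then have ij: "i < r" "j < r" by auto
  have "i - s (block_of i) < block_size (block_of i)" "j - s (block_of j) < block_size (block_of j)"
    using block_of_bounds[OF ij(1)] block_of_bounds[OF ij(2)] by (auto simp: block_size_def)
  then show "blkdiag (map (\<lambda>b. diagm (block_size b) (qf b)) [0..<p]) $$ (i,j) = diagm r q $$ (i,j)"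
    using index_blkdiag_blocks[of "\<lambda>b. diagm (block_size b) (qf b)", OF _ ij]
      assms[of "block_of i" "i - s (block_of i)"]
      block_of_bounds[OF ij(1)] block_of_bounds[OF ij(2)] ij
    by (auto simp: diagm_def)
qed (use blkdiag_blocks_carrier[of "\<lambda>b. diagm (block_size b) (qf b)"] in auto)

lemma diag_block_carrier: "diag_block M b \<in> carrier_mat (block_size b) (block_size b)"
  by (simp add: diag_block_def)

lemma index_diag_block: "i < block_size b \<Longrightarrow> j < block_size b \<Longrightarrow> diag_block M b $$ (i,j) = M $$ (s b + i, s b + j)"
  by (simp add: diag_block_def)

lemma orthogonal_sym_weighted_entries:
  assumes B: "B \<in> stiefel r r" and comm: "diagm r a * B\<^sup>T = B * diagm r a" and ij: "i < r" "j < r"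
  shows "(block_of i \<noteq> block_of j \<longrightarrow> B $$ (i,j) = 0) \<and> (block_of i = block_of j \<longrightarrow> B $$ (i,j) = B $$ (j,i))"
proof -
  let ?D = "diagm r a"
  have Bc: "B \<in> carrier_mat r r" and Btc: "B\<^sup>T \<in> carrier_mat r r" using B by (auto simp: stiefel_def)
  have rel: "a i * B $$ (j,i) = B $$ (i,j) * a j"
    using arg_cong[where f = "\<lambda>M. M $$ (i,j)", OF comm] index_diagm_mult[OF Btc ij, of a]
      index_mult_diagm[OF Bc ij, of a] Bc ij by simp
  text \<open>\<open>D\<^sup>2\<close> commutes with \<open>B\<close>, which separates the blocks since the weights are positive.\<close>
  have "?D * (?D * B) = ?D * (B\<^sup>T * ?D)"
    using orthogonal_commute_transpose[OF B diagm_carrier comm] by simp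
  also have "\<dots> = (?D * B\<^sup>T) * ?D" using assoc_mult_mat[OF diagm_carrier Btc diagm_carrier] by simp
  also have "\<dots> = B * (?D * ?D)" using assoc_mult_mat[OF Bc diagm_carrier diagm_carrier] comm by simp
  finally have "(?D * (?D * B)) $$ (i,j) = (B * (?D * ?D)) $$ (i,j)" by simp
  moreover have "(?D * (?D * B)) $$ (i,j) = a i * (a i * B $$ (i,j))"
    using index_diagm_mult[OF mult_carrier_mat[OF diagm_carrier Bc] ij, of a] index_diagm_mult[OF Bc ij, of a]
    by (simp del: index_mult_mat)
  moreover have "(B * (?D * ?D)) $$ (i,j) = B $$ (i,j) * (a j * a j)"
    using index_mult_diagm[OF Bc ij, of "\<lambda>i. a i * a i"] by (simp add: diagm_mult_diagm del: index_mult_mat)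
  ultimately have sq: "a i * a i * B $$ (i,j) = B $$ (i,j) * (a j * a j)" by simp
  show ?thesis
  proof (intro conjI impI)
    assume "block_of i \<noteq> block_of j"
    then have "a i \<noteq> a j" using a_eq_iff_block_of[OF ij] by simp
    then have "a i * a i \<noteq> a j * a j"
      using power2_eq_iff_nonneg[of "a i" "a j"] weights_pos[OF ij(1)] weights_pos[OF ij(2)] by (simp add: power2_eq_square)
    then show "B $$ (i,j) = 0" using sq by (simp add: algebra_simps)
  next
    assume "block_of i = block_of j"
    then have "a i = a j" using a_eq_iff_block_of[OF ij] by simp
    then show "B $$ (i,j) = B $$ (j,i)" using rel weights_pos[OF ij(2)] by simp
  qed
qed

lemma orthogonal_sym_weighted_eq_blkdiag:
  assumes B: "B \<in> stiefel r r" and comm: "diagm r a * B\<^sup>T = B * diagm r a"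
  shows "B = blkdiag (map (diag_block B) [0..<p])"
proof (rule eq_matI)
  have Bc: "B \<in> carrier_mat r r" using B by (rule stiefel_carrier)
  fix i j assume "i < dim_row (blkdiag (map (diag_block B) [0..<p]))" "j < dim_col (blkdiag (map (diag_block B) [0..<p]))"
  then have ij: "i < r" "j < r" using blkdiag_blocks_carrier[of "diag_block B", OF diag_block_carrier] by auto
  show "B $$ (i,j) = blkdiag (map (diag_block B) [0..<p]) $$ (i,j)"
  proof (cases "block_of i = block_of j")
    case True
    then have "i - s (block_of i) < block_size (block_of i)" "j - s (block_of i) < block_size (block_of i)"
      using block_of_bounds[OF ij(1)] block_of_bounds[OF ij(2)] by (auto simp: block_size_def)
    then show ?thesis
      using index_blkdiag_blocks[of "diag_block B", OF diag_block_carrier ij] True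
        block_of_bounds[OF ij(1)] block_of_bounds[OF ij(2)] by (simp add: index_diag_block)
  next
    case False
    then show ?thesis
      using index_blkdiag_blocks[of "diag_block B", OF diag_block_carrier ij]
        orthogonal_sym_weighted_entries[OF B comm ij] by simp
  qed
qed (use blkdiag_blocks_carrier[of "diag_block B", OF diag_block_carrier] stiefel_carrier[OF B] in auto)

lemma diag_block_symmetric_orthogonal:
  assumes B: "B \<in> stiefel r r" and comm: "diagm r a * B\<^sup>T = B * diagm r a" and b: "b < p"
  shows "diag_block B b \<in> stiefel (block_size b) (block_size b) \<and> (diag_block B b)\<^sup>T = diag_block B b"
proof
  let ?F = "diag_block B"
  have "blkdiag (map (\<lambda>b. (?F b)\<^sup>T * ?F b) [0..<p])
      = (blkdiag (map ?F [0..<p]))\<^sup>T * blkdiag (map ?F [0..<p])"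
    using blkdiag_transpose[of "[0..<p]" ?F block_size] blkdiag_mult[of "[0..<p]" "\<lambda>b. (?F b)\<^sup>T" block_size ?F]
      diag_block_carrier by simp
  also have "\<dots> = B\<^sup>T * B"
    using orthogonal_sym_weighted_eq_blkdiag[OF B comm] by (rule arg_cong[where f = "\<lambda>X. X\<^sup>T * X", symmetric])
  also have "\<dots> = blkdiag (map (\<lambda>b. 1\<^sub>m (block_size b)) [0..<p])"
    using B sum_block_sizes[of p] sp by (simp add: stiefel_def blkdiag_one)
  finally have eq: "blkdiag (map (\<lambda>b. (?F b)\<^sup>T * ?F b) [0..<p])
      = blkdiag (map (\<lambda>b. 1\<^sub>m (block_size b)) [0..<p])" .
  have carr: "(?F c)\<^sup>T * ?F c \<in> carrier_mat (block_size c) (block_size c)" for c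
    using mult_carrier_mat[of "(?F c)\<^sup>T" "block_size c" "block_size c" "?F c" "block_size c"]
      diag_block_carrier[of B c] by simp
  have "(?F b)\<^sup>T * ?F b = 1\<^sub>m (block_size b)"
    by (rule blkdiag_blocks_inject[OF carr _ eq b]) simp
  then show "?F b \<in> stiefel (block_size b) (block_size b)" by (simp add: stiefel_def diag_block_carrier)
  show "(?F b)\<^sup>T = ?F b"
  proof (rule eq_matI)
    fix i j assume "i < dim_row (?F b)" "j < dim_col (?F b)"
    then have ij: "i < block_size b" "j < block_size b" by (auto simp: diag_block_def)
    show "(?F b)\<^sup>T $$ (i,j) = ?F b $$ (i,j)"
      using orthogonal_sym_weighted_entries[OF B comm, of "s b + j" "s b + i"] in_block[OF b ij(1)] in_block[OF b ij(2)] ij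
      by (simp add: diag_block_def)
  qed (simp_all add: diag_block_def)
qed

lemma diag_blocks_spectral:
  assumes B: "B \<in> stiefel r r" and comm: "diagm r a * B\<^sup>T = B * diagm r a"
  shows "\<exists>Uf qf. \<forall>b<p. Uf b \<in> stiefel (block_size b) (block_size b) \<and>
    (\<forall>i<block_size b. qf b i = 1 \<or> qf b i = -1) \<and>
    diag_block B b = Uf b * diagm (block_size b) (qf b) * (Uf b)\<^sup>T"
proof -
  define P where "P b U qb \<longleftrightarrow> U \<in> stiefel (block_size b) (block_size b) \<and>
      (\<forall>i<block_size b. qb i = 1 \<or> qb i = -1) \<and> diag_block B b = U * diagm (block_size b) qb * U\<^sup>T"
    for b U qb
  have "\<forall>b. \<exists>U. \<exists>qb. b < p \<longrightarrow> P b U qb"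
  proof
    fix b
    show "\<exists>U qb. b < p \<longrightarrow> P b U qb"
    proof (cases "b < p")
      case True
      have "diag_block B b \<in> stiefel (block_size b) (block_size b)" "(diag_block B b)\<^sup>T = diag_block B b"
        using diag_block_symmetric_orthogonal[OF B comm True] by auto
      from symmetric_orthogonal_spectral[OF this] obtain U qb where "P b U qb"
        unfolding P_def by blast
      then show ?thesis by blast
    qed simp
  qed
  then obtain Uf where "\<forall>b. \<exists>qb. b < p \<longrightarrow> P b (Uf b) qb" by (rule choice[THEN exE])
  then obtain qf where "\<forall>b. b < p \<longrightarrow> P b (Uf b) (qf b)" by (rule choice[THEN exE])
  then show ?thesis unfolding P_def by blast
qed

lemma orthogonal_sym_weighted_form:
  assumes B: "B \<in> stiefel r r" and comm: "diagm r a * B\<^sup>T = B * diagm r a"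
  shows "\<exists>Uf q. (\<forall>b<p. Uf b \<in> stiefel (block_size b) (block_size b)) \<and> (\<forall>i<r. q i = 1 \<or> q i = -1) \<and>
    B = blkdiag (map Uf [0..<p]) * diagm r q * (blkdiag (map Uf [0..<p]))\<^sup>T"
proof -
  obtain Uf qf where Uf: "\<And>b. b < p \<Longrightarrow> Uf b \<in> stiefel (block_size b) (block_size b)"
    and qf: "\<And>b i. b < p \<Longrightarrow> i < block_size b \<Longrightarrow> qf b i = 1 \<or> qf b i = -1"
    and block: "\<And>b. b < p \<Longrightarrow> diag_block B b = Uf b * diagm (block_size b) (qf b) * (Uf b)\<^sup>T"
    using diag_blocks_spectral[OF B comm] by blast
  define q where "q i = qf (block_of i) (i - s (block_of i))" for i
  have Ufc: "\<And>b. b < p \<Longrightarrow> Uf b \<in> carrier_mat (block_size b) (block_size b)"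
    using Uf by (simp add: stiefel_def)
  have "B = blkdiag (map (diag_block B) [0..<p])" by (rule orthogonal_sym_weighted_eq_blkdiag[OF B comm])
  also have "\<dots> = blkdiag (map (\<lambda>b. Uf b * diagm (block_size b) (qf b) * (Uf b)\<^sup>T) [0..<p])"
    by (rule arg_cong[where f = blkdiag], rule map_cong) (simp_all add: block)
  also have "\<dots> = blkdiag (map (\<lambda>b. Uf b * diagm (block_size b) (qf b)) [0..<p])
      * blkdiag (map (\<lambda>b. (Uf b)\<^sup>T) [0..<p])"
    using blkdiag_mult[of "[0..<p]" "\<lambda>b. Uf b * diagm (block_size b) (qf b)" block_size "\<lambda>b. (Uf b)\<^sup>T"]
      mult_carrier_mat[OF Ufc diagm_carrier] Ufc by simp
  also have "\<dots> = blkdiag (map Uf [0..<p]) * blkdiag (map (\<lambda>b. diagm (block_size b) (qf b)) [0..<p])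
      * blkdiag (map (\<lambda>b. (Uf b)\<^sup>T) [0..<p])"
    using blkdiag_mult[of "[0..<p]" Uf block_size "\<lambda>b. diagm (block_size b) (qf b)"] Ufc by simp
  also have "blkdiag (map (\<lambda>b. diagm (block_size b) (qf b)) [0..<p]) = diagm r q"
    by (rule blkdiag_diagm_blocks) (simp add: q_def in_block)
  also have "blkdiag (map (\<lambda>b. (Uf b)\<^sup>T) [0..<p]) = (blkdiag (map Uf [0..<p]))\<^sup>T"
    using blkdiag_transpose[of "[0..<p]" Uf block_size] Ufc by simp
  finally have "B = blkdiag (map Uf [0..<p]) * diagm r q * (blkdiag (map Uf [0..<p]))\<^sup>T" .
  moreover have "q i = 1 \<or> q i = -1" if "i < r" for i
    using qf block_of_bounds[OF that] by (simp add: q_def block_size_def)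
  ultimately show ?thesis using Uf by blast
qed

lemma blkdiag_blocks_stiefel:
  assumes Uf: "\<And>b. b < p \<Longrightarrow> Uf b \<in> stiefel (block_size b) (block_size b)"
  shows "blkdiag (map Uf [0..<p]) \<in> stiefel r r"
proof -
  have Ufc: "\<And>b. b < p \<Longrightarrow> Uf b \<in> carrier_mat (block_size b) (block_size b)"
    using Uf by (simp add: stiefel_def)
  have "(blkdiag (map Uf [0..<p]))\<^sup>T * blkdiag (map Uf [0..<p]) = blkdiag (map (\<lambda>b. (Uf b)\<^sup>T * Uf b) [0..<p])"
    using blkdiag_transpose[of "[0..<p]" Uf block_size] blkdiag_mult[of "[0..<p]" "\<lambda>b. (Uf b)\<^sup>T" block_size Uf]
      Ufc by simp
  also have "\<dots> = blkdiag (map (\<lambda>b. 1\<^sub>m (block_size b)) [0..<p])"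
    using Uf by (intro arg_cong[where f = blkdiag] map_cong) (auto simp: stiefel_def)
  also have "\<dots> = 1\<^sub>m r" using sum_block_sizes[of p] sp by (simp add: blkdiag_one)
  finally show ?thesis using blkdiag_blocks_carrier[OF Ufc] by (simp add: stiefel_def)
qed

lemma conj_blkdiag_orthogonal_sym_weighted:
  assumes Uf: "\<And>b. b < p \<Longrightarrow> Uf b \<in> stiefel (block_size b) (block_size b)"
    and q: "\<forall>i<r. q i = 1 \<or> q i = -1"
    and M_def: "M = blkdiag (map Uf [0..<p]) * diagm r q * (blkdiag (map Uf [0..<p]))\<^sup>T"
  shows "M \<in> stiefel r r \<and> diagm r a * M\<^sup>T = M * diagm r a"
proof -
  let ?U = "blkdiag (map Uf [0..<p])"
  have Ufc: "\<And>b. b < p \<Longrightarrow> Uf b \<in> carrier_mat (block_size b) (block_size b)"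
    using Uf by (simp add: stiefel_def)
  have Uc: "?U \<in> carrier_mat r r" by (rule blkdiag_blocks_carrier[OF Ufc])
  have M: "M \<in> stiefel r r" and M_sym: "M\<^sup>T = M"
    using orthogonal_conj_sign_diagm[OF blkdiag_blocks_stiefel[OF Uf] q] M_def by auto
  have Mc: "M \<in> carrier_mat r r" using M by (rule stiefel_carrier)
  have U_zero: "?U $$ (i,k) = 0" if "i < r" "k < r" "block_of i \<noteq> block_of k" for i k
    using index_blkdiag_blocks[OF Ufc that(1,2)] that(3) by simp
  have M_zero: "M $$ (i,j) = 0" if ij: "i < r" "j < r" and b: "block_of i \<noteq> block_of j" for i j
  proof -
    have "M $$ (i,j) = (\<Sum>k<r. ?U $$ (i,k) * q k * ?U $$ (j,k))"
      unfolding M_def by (rule index_conj_diagm[OF Uc ij])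
    also have "\<dots> = 0"
      using U_zero ij b by (intro sum.neutral) (metis lessThan_iff mult_eq_0_iff)
    finally show ?thesis .
  qed
  have "diagm r a * M = M * diagm r a"
  proof (rule eq_matI)
    fix i j assume "i < dim_row (M * diagm r a)" "j < dim_col (M * diagm r a)"
    then have ij: "i < r" "j < r" using Mc by auto
    show "(diagm r a * M) $$ (i,j) = (M * diagm r a) $$ (i,j)"
      using index_diagm_mult[OF Mc ij, of a] index_mult_diagm[OF Mc ij, of a] a_eq_iff_block_of[OF ij] M_zero[OF ij]
      by (cases "block_of i = block_of j") (simp_all del: index_mult_mat)
  qed (use Mc in auto)
  then show ?thesis using M M_sym by simp
qed

lemma orthogonal_sym_weighted_iff:
  "B \<in> stiefel r r \<and> diagm r a * B\<^sup>T = B * diagm r a \<longleftrightarrow>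
   (\<exists>Us q. length Us = p \<and> (\<forall>b<p. Us ! b \<in> stiefel (block_size b) (block_size b)) \<and>
      (\<forall>i<r. q i = 1 \<or> q i = -1) \<and> B = blkdiag Us * diagm r q * (blkdiag Us)\<^sup>T)"
proof
  assume "B \<in> stiefel r r \<and> diagm r a * B\<^sup>T = B * diagm r a"
  then obtain Uf q where "\<forall>b<p. Uf b \<in> stiefel (block_size b) (block_size b)" "\<forall>i<r. q i = 1 \<or> q i = -1"
    "B = blkdiag (map Uf [0..<p]) * diagm r q * (blkdiag (map Uf [0..<p]))\<^sup>T"
    using orthogonal_sym_weighted_form by blast
  then show "\<exists>Us q. length Us = p \<and> (\<forall>b<p. Us ! b \<in> stiefel (block_size b) (block_size b)) \<and>
      (\<forall>i<r. q i = 1 \<or> q i = -1) \<and> B = blkdiag Us * diagm r q * (blkdiag Us)\<^sup>T"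
    by (intro exI[of _ "map Uf [0..<p]"] exI[of _ q]) auto
next
  assume "\<exists>Us q. length Us = p \<and> (\<forall>b<p. Us ! b \<in> stiefel (block_size b) (block_size b)) \<and>
      (\<forall>i<r. q i = 1 \<or> q i = -1) \<and> B = blkdiag Us * diagm r q * (blkdiag Us)\<^sup>T"
  then obtain Us q where Us: "length Us = p" "\<forall>b<p. Us ! b \<in> stiefel (block_size b) (block_size b)"
    and q: "\<forall>i<r. q i = 1 \<or> q i = -1" and B: "B = blkdiag Us * diagm r q * (blkdiag Us)\<^sup>T"
    by blast
  have "Us = map (\<lambda>b. Us ! b) [0..<p]" using Us(1) map_nth[of Us] by simp
  then show "B \<in> stiefel r r \<and> diagm r a * B\<^sup>T = B * diagm r a"
    using conj_blkdiag_orthogonal_sym_weighted[of "\<lambda>b. Us ! b" q B] Us(2) q B by simp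
qed

end

lemma diag_weights_mult_four_block:
  assumes "B \<in> carrier_mat r r" "C \<in> carrier_mat r m" "E \<in> carrier_mat n r" "V \<in> carrier_mat n m"
  shows "four_block_mat (diagm r a) (0\<^sub>m r m) (0\<^sub>m n r) (0\<^sub>m n m) * (four_block_mat B C E V)\<^sup>T
      = four_block_mat (diagm r a * B\<^sup>T) (diagm r a * E\<^sup>T) (0\<^sub>m n r) (0\<^sub>m n n)"
    and "four_block_mat B C E V * (four_block_mat (diagm r a) (0\<^sub>m r m) (0\<^sub>m n r) (0\<^sub>m n m))\<^sup>T
      = four_block_mat (B * diagm r a) (0\<^sub>m r n) (E * diagm r a) (0\<^sub>m n n)"
proof -
  have "diagm r a * B\<^sup>T \<in> carrier_mat r r" "diagm r a * E\<^sup>T \<in> carrier_mat r n"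
    "B * diagm r a \<in> carrier_mat r r" "E * diagm r a \<in> carrier_mat n r"
    using assms by (auto intro!: mult_carrier_mat[of _ r r])
  with assms show "four_block_mat (diagm r a) (0\<^sub>m r m) (0\<^sub>m n r) (0\<^sub>m n m) * (four_block_mat B C E V)\<^sup>T
      = four_block_mat (diagm r a * B\<^sup>T) (diagm r a * E\<^sup>T) (0\<^sub>m n r) (0\<^sub>m n n)"
    and "four_block_mat B C E V * (four_block_mat (diagm r a) (0\<^sub>m r m) (0\<^sub>m n r) (0\<^sub>m n m))\<^sup>T
      = four_block_mat (B * diagm r a) (0\<^sub>m r n) (E * diagm r a) (0\<^sub>m n n)"
    by (simp_all add: transpose_four_block_mat
        transpose_four_block_mat[of "diagm r a" r r "0\<^sub>m r m" m "0\<^sub>m n r" n]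
        mult_four_block_mat[of _ r r _ m _ n]
        mult_four_block_mat[of B r r C m E n V "diagm r a" r "0\<^sub>m r n" n "0\<^sub>m m r" "0\<^sub>m m n"])
qed

lemma stiefel_block_upper_triangular:
  assumes Bc: "B \<in> carrier_mat r r" and Cc: "C \<in> carrier_mat r m" and Vc: "V \<in> carrier_mat n m"
    and Q: "four_block_mat B C (0\<^sub>m n r) V \<in> stiefel (r + n) (r + m)"
  shows "B \<in> stiefel r r \<and> C = 0\<^sub>m r m \<and> V \<in> stiefel n m"
proof -
  have c: "B\<^sup>T * B \<in> carrier_mat r r" "B\<^sup>T * C \<in> carrier_mat r m" "C\<^sup>T * B \<in> carrier_mat m r"
    "C\<^sup>T * C + V\<^sup>T * V \<in> carrier_mat m m"
    using Bc Cc Vc by (auto intro!: mult_carrier_mat[of _ r r] mult_carrier_mat[of _ m r]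
        add_carrier_mat mult_carrier_mat[of _ m n])
  have "four_block_mat (B\<^sup>T * B) (B\<^sup>T * C) (C\<^sup>T * B) (C\<^sup>T * C + V\<^sup>T * V)
      = four_block_mat (1\<^sub>m r) (0\<^sub>m r m) (0\<^sub>m m r) (1\<^sub>m m)"
    using Q four_block_mult_transpose[OF Bc Cc zero_carrier_mat Vc] c Vc by (simp add: stiefel_def)
  then have BtB: "B\<^sup>T * B = 1\<^sub>m r" and BtC: "B\<^sup>T * C = 0\<^sub>m r m" and CV: "C\<^sup>T * C + V\<^sup>T * V = 1\<^sub>m m"
    using four_block_mat_inject[OF c one_carrier_mat zero_carrier_mat zero_carrier_mat one_carrier_mat]
    by simp_all
  have B: "B \<in> stiefel r r" using Bc BtB by (simp add: stiefel_def)
  have "C = (B * B\<^sup>T) * C" using stiefel_square_mult_transpose[OF B] Cc by simp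
  also have "\<dots> = B * (B\<^sup>T * C)" using Bc Cc by (intro assoc_mult_mat[of _ r r _ r]) auto
  finally have C0: "C = 0\<^sub>m r m" using BtC Bc by simp
  then show ?thesis using B CV Vc by (simp add: stiefel_def)
qed

lemma stiefel_block_diagonal:
  assumes B: "B \<in> stiefel r r" and V: "V \<in> stiefel n m"
  shows "four_block_mat B (0\<^sub>m r m) (0\<^sub>m n r) V \<in> stiefel (r + n) (r + m)"
proof -
  have Bc: "B \<in> carrier_mat r r" and Vc: "V \<in> carrier_mat n m" using B V by (auto simp: stiefel_def)
  have "(four_block_mat B (0\<^sub>m r m) (0\<^sub>m n r) V)\<^sup>T * four_block_mat B (0\<^sub>m r m) (0\<^sub>m n r) V = 1\<^sub>m (r + m)"
    using four_block_mult_transpose[OF Bc zero_carrier_mat zero_carrier_mat Vc] B V Bc Vc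
    by (simp add: stiefel_def)
  then show ?thesis using Bc Vc by (simp add: stiefel_def)
qed

lemma stationary_weights_blocks:
  fixes a :: "nat \<Rightarrow> real"
  assumes a_nz: "\<And>i. i < r \<Longrightarrow> a i \<noteq> 0"
    and Bc: "B \<in> carrier_mat r r" and Cc: "C \<in> carrier_mat r m" and Ec: "E \<in> carrier_mat n r"
    and Vc: "V \<in> carrier_mat n m"
    and A_def: "A = four_block_mat (diagm r a) (0\<^sub>m r m) (0\<^sub>m n r) (0\<^sub>m n m)"
    and Q_def: "Q = four_block_mat B C E V"
  shows "A * Q\<^sup>T = Q * A\<^sup>T \<longleftrightarrow> diagm r a * B\<^sup>T = B * diagm r a \<and> E = 0\<^sub>m n r"
proof
  let ?D = "diagm r a"
  assume sym: "A * Q\<^sup>T = Q * A\<^sup>T"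
  have eq: "four_block_mat (?D * B\<^sup>T) (?D * E\<^sup>T) (0\<^sub>m n r) (0\<^sub>m n n)
      = four_block_mat (B * ?D) (0\<^sub>m r n) (E * ?D) (0\<^sub>m n n)"
    using sym diag_weights_mult_four_block[OF Bc Cc Ec Vc, of a] unfolding A_def Q_def by simp
  have c: "?D * B\<^sup>T \<in> carrier_mat r r" "?D * E\<^sup>T \<in> carrier_mat r n"
    "B * ?D \<in> carrier_mat r r" "E * ?D \<in> carrier_mat n r"
    using Bc Ec by (auto intro!: mult_carrier_mat[of _ r r])
  have Etc: "E\<^sup>T \<in> carrier_mat r n" using Ec by simp
  have comm: "?D * B\<^sup>T = B * ?D" and DE0: "?D * E\<^sup>T = 0\<^sub>m r n"
    using four_block_mat_inject[OF c(1,2) zero_carrier_mat zero_carrier_mat c(3) zero_carrier_mat c(4)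
        zero_carrier_mat eq] by simp_all
  have "E\<^sup>T = 0\<^sub>m r n" by (rule diagm_cancel_left[OF a_nz Etc DE0])
  then have "E = 0\<^sub>m n r" by (metis transpose_transpose zero_transpose_mat)
  with comm show "?D * B\<^sup>T = B * ?D \<and> E = 0\<^sub>m n r" ..
next
  assume "diagm r a * B\<^sup>T = B * diagm r a \<and> E = 0\<^sub>m n r"
  then show "A * Q\<^sup>T = Q * A\<^sup>T"
    using diag_weights_mult_four_block[OF Bc Cc Ec Vc, of a] unfolding A_def Q_def by simp
qed

lemma stationary_iff_block_form:
  fixes a :: "nat \<Rightarrow> real"
  assumes rK: "r \<le> K" and Kd: "K \<le> d" and a_nz: "\<And>i. i < r \<Longrightarrow> a i \<noteq> 0"
    and A_def: "A = four_block_mat (diagm r a) (0\<^sub>m r (K - r)) (0\<^sub>m (d - r) r) (0\<^sub>m (d - r) (K - r))"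
  shows "Q \<in> stiefel d K \<and> A * Q\<^sup>T = Q * A\<^sup>T \<longleftrightarrow>
    (\<exists>B V. B \<in> stiefel r r \<and> diagm r a * B\<^sup>T = B * diagm r a \<and> V \<in> stiefel (d - r) (K - r) \<and>
      Q = four_block_mat B (0\<^sub>m r (K - r)) (0\<^sub>m (d - r) r) V)" (is "?lhs \<longleftrightarrow> ?rhs")
proof
  assume ?lhs
  then have Q: "Q \<in> stiefel d K" and sym: "A * Q\<^sup>T = Q * A\<^sup>T" by auto
  obtain B C E V where split: "split_block Q r r = (B, C, E, V)" by (metis prod_cases4)
  have "dim_row Q = r + (d - r)" "dim_col Q = r + (K - r)" using Q rK Kd by (auto simp: stiefel_def)
  note blocks = split_block[OF split this]
  then have Bc: "B \<in> carrier_mat r r" and Vc: "V \<in> carrier_mat (d - r) (K - r)"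
    and Q_eq: "Q = four_block_mat B C E V" by auto
  have comm: "diagm r a * B\<^sup>T = B * diagm r a" and E0: "E = 0\<^sub>m (d - r) r"
    using stationary_weights_blocks[OF a_nz Bc _ _ Vc A_def Q_eq] blocks sym by auto
  have "Q \<in> stiefel (r + (d - r)) (r + (K - r))" using Q rK Kd by simp
  then show ?rhs
    using stiefel_block_upper_triangular[OF Bc _ Vc] blocks Q_eq E0 comm by auto
next
  assume ?rhs
  then obtain B V where B: "B \<in> stiefel r r" and comm: "diagm r a * B\<^sup>T = B * diagm r a"
    and V: "V \<in> stiefel (d - r) (K - r)" and Q_eq: "Q = four_block_mat B (0\<^sub>m r (K - r)) (0\<^sub>m (d - r) r) V"
    by blast
  have "Q \<in> stiefel d K" using stiefel_block_diagonal[OF B V] rK Kd Q_eq by simp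
  moreover have "A * Q\<^sup>T = Q * A\<^sup>T"
    using stationary_weights_blocks[OF a_nz stiefel_carrier[OF B] _ _ stiefel_carrier[OF V] A_def Q_eq] comm
    by simp
  ultimately show ?lhs ..
qed

theorem proposition2:
  fixes d K r p :: nat and a :: "nat \<Rightarrow> real" and s :: "nat \<Rightarrow> nat"
    and A Q :: "real mat" and g :: "real mat \<Rightarrow> ereal" and h :: "nat \<Rightarrow> nat"
  assumes "1 \<le> r" "r \<le> K" "K \<le> d"
    and a_mono: "\<And>i. i + 1 < r \<Longrightarrow> a i \<ge> a (i + 1)"
    and a_pos: "a (r - 1) > 0"
    and A_def: "A = four_block_mat (diagm r a) (0\<^sub>m r (K - r)) (0\<^sub>m (d - r) r) (0\<^sub>m (d - r) (K - r))"
    and s0: "s 0 = 0" and sp: "s p = r"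
    and s_mono: "\<And>i. i < p \<Longrightarrow> s i < s (i + 1)"
    and a_const: "\<And>i j. 1 \<le> i \<Longrightarrow> i \<le> p \<Longrightarrow> s (i - 1) \<le> j \<Longrightarrow> j < s i \<Longrightarrow> a j = a (s i - 1)"
    and a_strict: "\<And>i. 1 \<le> i \<Longrightarrow> i < p \<Longrightarrow> a (s i - 1) > a (s (i + 1) - 1)"
    and h_def: "\<And>i. h i = s i - s (i - 1)"
    and g_def: "\<And>X. g X = ereal (frob_inner A X) + indicator_fun (stiefel d K) X"
    and Q_dim: "Q \<in> carrier_mat d K"
  shows "Q \<in> {X \<in> stiefel d K. 0\<^sub>m d K \<in> limiting_subdiff d K g X} \<longleftrightarrow>
    (\<exists>Us q V. length Us = p \<and> (\<forall>i<p. Us ! i \<in> stiefel (h (i + 1)) (h (i + 1))) \<and>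
       (\<forall>i<r. q i = 1 \<or> q i = -1) \<and> V \<in> stiefel (d - r) (K - r) \<and>
       Q = four_block_mat (blkdiag Us * diagm r q * (blkdiag Us)\<^sup>T)
             (0\<^sub>m r (K - r)) (0\<^sub>m (d - r) r) V)"
proof -
  interpret weight_blocks r p a s
    by unfold_locales (fact a_mono a_pos s0 sp s_mono a_const a_strict)+
  have "A \<in> carrier_mat (r + (d - r)) (r + (K - r))"
    unfolding A_def by (rule four_block_carrier_mat) simp_all
  then have A: "A \<in> carrier_mat d K" using assms(2,3) by simp
  have h: "h (b + 1) = block_size b" for b using h_def[of "b + 1"] by (simp add: block_size_def)
  have "Q \<in> {X \<in> stiefel d K. 0\<^sub>m d K \<in> limiting_subdiff d K g X} \<longleftrightarrow> Q \<in> stiefel d K \<and> A * Q\<^sup>T = Q * A\<^sup>T"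
    using limiting_stationary_linear_stiefel_iff[OF g_def A] by auto
  also have "\<dots> \<longleftrightarrow> (\<exists>B V. (B \<in> stiefel r r \<and> diagm r a * B\<^sup>T = B * diagm r a) \<and> V \<in> stiefel (d - r) (K - r) \<and>
      Q = four_block_mat B (0\<^sub>m r (K - r)) (0\<^sub>m (d - r) r) V)"
    using stationary_iff_block_form[OF assms(2,3) _ A_def] weights_pos by (simp add: less_imp_neq[symmetric])
  also have "\<dots> \<longleftrightarrow> (\<exists>Us q V. length Us = p \<and> (\<forall>i<p. Us ! i \<in> stiefel (h (i + 1)) (h (i + 1))) \<and>
      (\<forall>i<r. q i = 1 \<or> q i = -1) \<and> V \<in> stiefel (d - r) (K - r) \<and>
      Q = four_block_mat (blkdiag Us * diagm r q * (blkdiag Us)\<^sup>T) (0\<^sub>m r (K - r)) (0\<^sub>m (d - r) r) V)"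
    unfolding orthogonal_sym_weighted_iff h by blast
  finally show ?thesis .
qed

end
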